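(* Let $(R,\mathfrak{m})$ be a Noetherian local ring and let $I$ be an ideal of $R$. Let $x_1,\ldots,x_s,y$ be a minimal generating set of $I$ and $J=(x_1,\ldots,x_s)$. Assume that $x_1,\ldots,x_s$ is an $R$-sequence and that the initial forms $x_1^*,\ldots,x_{s-1}^*$ form a $\mathbf{G}(I)$-sequence. Then, for each $n\geq 2$, every $F\in Q_n$ satisfies $F(0,\ldots,0,1)\in (JI^{n-1}:y^n)$, and the map $F\mapsto F(0,\ldots,0,1)$ induces an isomorphism of $R$-modules $$\left[\frac{Q}{Q\langle n-1\rangle}\right]_n\cong \frac{JI^{n-1}:y^{n}}{JI^{n-2}:y^{n-1}}.$$ In particular, if $J$ is a reduction of $I$ with reduction number $r=\mathrm{r}_J(I)$, then $\mathrm{rt}(I)=\mathrm{r}_J(I)+1$ and there is a form $Y^{r+1}-\sum_{i=1}^s X_iF_i\in Q_{r+1}$, with $F_i\in V_r$, such that $Q=(Y^{r+1}-\sum_i X_iF_i)+Q\langle r\rangle$.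
   Context: $\mathbf{R}(I)=R[It]=\bigoplus_{n\geq0}I^nt^n$ is the Rees algebra and $\mathbf{G}(I)=\bigoplus_{n\geq 0}I^n/I^{n+1}$ the associated graded ring; $x_i^*$ denotes the class of $x_i$ in $I/I^2$. $V=R[X_1,\ldots,X_s,Y]$ is a polynomial ring graded by total degree in the variables, $V_n$ its degree-$n$ component, and $\varphi:V\to\mathbf{R}(I)$ is the graded $R$-algebra map with $X_i\mapsto x_it$, $Y\mapsto yt$. $Q=\ker\varphi=\bigoplus_{n\geq1}Q_n$ (the equations of $\mathbf{R}(I)$), and for $n\geq1$, $Q\langle n\rangle$ is the ideal of $V$ generated by the homogeneous elements of $Q$ of degree at most $n$; $[Q/Q\langle n-1\rangle]_n$ denotes the degree-$n$ component. Convention $I^0=R$. The relation type $\mathrm{rt}(I)$ is the least $N\geq1$ with $Q=Q\langle N\rangle$. $J\subseteq I$ is a reduction of $I$ if $I^{m+1}=JI^m$ for some $m\geq 0$, and the reduction number $\mathrm{r}_J(I)$ is the least such $m$. *)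

theory Defs
  imports Main "HOL-Library.Poly_Mapping" "HOL-Computational_Algebra.Polynomial"
begin

definition is_ideal :: "'a::comm_ring_1 set \<Rightarrow> bool" where
  "is_ideal A \<longleftrightarrow> 0 \<in> A \<and> (\<forall>a\<in>A. \<forall>b\<in>A. a + b \<in> A) \<and> (\<forall>r. \<forall>a\<in>A. r * a \<in> A)"

definition gen_ideal :: "'a::comm_ring_1 set \<Rightarrow> 'a set" where
  "gen_ideal S = {a. \<exists>(k::nat) c g. (\<forall>i<k. g i \<in> S) \<and> a = (\<Sum>i<k. c i * g i)}"

definition ideal_prod :: "'a::comm_ring_1 set \<Rightarrow> 'a set \<Rightarrow> 'a set" where
  "ideal_prod A B = gen_ideal {a * b | a b. a \<in> A \<and> b \<in> B}"

fun ideal_pow :: "'a::comm_ring_1 set \<Rightarrow> nat \<Rightarrow> 'a set" where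
  "ideal_pow I 0 = UNIV"
| "ideal_pow I (Suc n) = ideal_prod I (ideal_pow I n)"

definition colon :: "'a::comm_ring_1 set \<Rightarrow> 'a \<Rightarrow> 'a set" where
  "colon A b = {r. r * b \<in> A}"

definition noetherian :: "'a::comm_ring_1 itself \<Rightarrow> bool" where
  "noetherian _ \<longleftrightarrow> (\<forall>A::'a set. is_ideal A \<longrightarrow> (\<exists>S. finite S \<and> A = gen_ideal S))"

definition local_ring :: "'a::comm_ring_1 set \<Rightarrow> bool" where
  "local_ring m \<longleftrightarrow> is_ideal m \<and> m \<noteq> UNIV \<and> (\<forall>A. is_ideal A \<and> A \<noteq> UNIV \<longrightarrow> A \<subseteq> m)"

definition minimal_gens :: "'a::comm_ring_1 set \<Rightarrow> nat \<Rightarrow> (nat \<Rightarrow> 'a) \<Rightarrow> 'a \<Rightarrow> bool" where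
  "minimal_gens I s x y \<longleftrightarrow> I = gen_ideal (insert y (x ` {..<s}))
     \<and> (\<forall>S. finite S \<and> gen_ideal S = I \<longrightarrow> Suc s \<le> card S)"

definition reg_seq :: "(nat \<Rightarrow> 'a::comm_ring_1) \<Rightarrow> nat \<Rightarrow> bool" where
  "reg_seq x k \<longleftrightarrow>
     (\<forall>i<k. \<forall>a. a * x i \<in> gen_ideal (x ` {..<i}) \<longrightarrow> a \<in> gen_ideal (x ` {..<i}))
     \<and> gen_ideal (x ` {..<k}) \<noteq> UNIV"

text \<open>An element of \<open>G(I) = \<Oplus> I^n/I^{n+1}\<close> is represented by a finitely supported
  family g with \<open>g n \<in> I^n\<close>; two families represent the same element iff
  \<open>g n - h n \<in> I^{n+1}\<close> for all n.\<close>
definition Gelem :: "'a::comm_ring_1 set \<Rightarrow> (nat \<Rightarrow> 'a) \<Rightarrow> bool" where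
  "Gelem I g \<longleftrightarrow> (\<forall>n. g n \<in> ideal_pow I n) \<and> finite {n. g n \<noteq> 0}"

definition Geq :: "'a::comm_ring_1 set \<Rightarrow> (nat \<Rightarrow> 'a) \<Rightarrow> (nat \<Rightarrow> 'a) \<Rightarrow> bool" where
  "Geq I g h \<longleftrightarrow> (\<forall>n. g n - h n \<in> ideal_pow I (Suc n))"

definition Gmult :: "(nat \<Rightarrow> 'a::comm_ring_1) \<Rightarrow> (nat \<Rightarrow> 'a) \<Rightarrow> nat \<Rightarrow> 'a" where
  "Gmult g h = (\<lambda>n. \<Sum>i\<le>n. g i * h (n - i))"

definition Gone :: "nat \<Rightarrow> 'a::comm_ring_1" where
  "Gone = (\<lambda>n. if n = 0 then 1 else 0)"

text \<open>Initial form \<open>x^*\<close> of \<open>x \<in> I\<close>: the class of x in \<open>I/I^2\<close>.\<close>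
definition Gstar :: "'a::comm_ring_1 \<Rightarrow> nat \<Rightarrow> 'a" where
  "Gstar a = (\<lambda>n. if n = 1 then a else 0)"

definition Gideal :: "'a::comm_ring_1 set \<Rightarrow> (nat \<Rightarrow> 'a) \<Rightarrow> nat \<Rightarrow> (nat \<Rightarrow> 'a) \<Rightarrow> bool" where
  "Gideal I x k g \<longleftrightarrow> Gelem I g \<and> (\<exists>c. (\<forall>j<k. Gelem I (c j)) \<and>
      Geq I g (\<lambda>n. \<Sum>j<k. Gmult (Gstar (x j)) (c j) n))"

definition G_reg_seq :: "'a::comm_ring_1 set \<Rightarrow> (nat \<Rightarrow> 'a) \<Rightarrow> nat \<Rightarrow> bool" where
  "G_reg_seq I x k \<longleftrightarrow>
     (\<forall>i<k. \<forall>g. Gelem I g \<longrightarrow> Gideal I x i (Gmult (Gstar (x i)) g) \<longrightarrow> Gideal I x i g)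
     \<and> \<not> Gideal I x k Gone"

text \<open>Polynomials in variables indexed by nat; variable i < s is X_i, variable s is Y.\<close>
type_synonym 'a mpoly = "(nat \<Rightarrow>\<^sub>0 nat) \<Rightarrow>\<^sub>0 'a"

definition mdeg :: "(nat \<Rightarrow>\<^sub>0 nat) \<Rightarrow> nat" where
  "mdeg mon = (\<Sum>i\<in>Poly_Mapping.keys mon. Poly_Mapping.lookup mon i)"

definition Vcarrier :: "nat \<Rightarrow> 'a::comm_ring_1 mpoly set" where
  "Vcarrier s = {F. \<forall>mon\<in>Poly_Mapping.keys F. Poly_Mapping.keys mon \<subseteq> {..s}}"

definition homog :: "nat \<Rightarrow> 'a::comm_ring_1 mpoly \<Rightarrow> bool" where
  "homog n F \<longleftrightarrow> (\<forall>mon\<in>Poly_Mapping.keys F. mdeg mon = n)"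

definition Vdeg :: "nat \<Rightarrow> nat \<Rightarrow> 'a::comm_ring_1 mpoly set" where
  "Vdeg s n = {F \<in> Vcarrier s. homog n F}"

definition Var :: "nat \<Rightarrow> 'a::comm_ring_1 mpoly" where
  "Var i = Poly_Mapping.single (Poly_Mapping.single i 1) 1"

definition Const :: "'a::comm_ring_1 \<Rightarrow> 'a mpoly" where
  "Const c = Poly_Mapping.single 0 c"

definition meval :: "(nat \<Rightarrow> 'a::comm_ring_1) \<Rightarrow> 'a mpoly \<Rightarrow> 'a" where
  "meval f F = (\<Sum>mon\<in>Poly_Mapping.keys F. Poly_Mapping.lookup F mon * (\<Prod>i\<in>Poly_Mapping.keys mon. f i ^ Poly_Mapping.lookup mon i))"

definition Vgen :: "nat \<Rightarrow> 'a::comm_ring_1 mpoly set \<Rightarrow> 'a mpoly set" where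
  "Vgen s S = {F. \<exists>(k::nat) c g. (\<forall>i<k. g i \<in> S \<and> c i \<in> Vcarrier s) \<and> F = (\<Sum>i<k. c i * g i)}"

definition gens :: "nat \<Rightarrow> (nat \<Rightarrow> 'a) \<Rightarrow> 'a \<Rightarrow> nat \<Rightarrow> 'a" where
  "gens s x y i = (if i < s then x i else y)"

text \<open>The graded R-algebra map \<open>\<phi> : V \<rightarrow> R[It] \<subseteq> R[t]\<close>, \<open>X_i \<mapsto> x_i t\<close>, \<open>Y \<mapsto> y t\<close>.\<close>
definition rees_map :: "nat \<Rightarrow> (nat \<Rightarrow> 'a::comm_ring_1) \<Rightarrow> 'a \<Rightarrow> 'a mpoly \<Rightarrow> 'a poly" where
  "rees_map s x y F = (\<Sum>mon\<in>Poly_Mapping.keys F.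
      monom (Poly_Mapping.lookup F mon * (\<Prod>i\<in>Poly_Mapping.keys mon. gens s x y i ^ Poly_Mapping.lookup mon i)) (mdeg mon))"

definition Qeq :: "nat \<Rightarrow> (nat \<Rightarrow> 'a::comm_ring_1) \<Rightarrow> 'a \<Rightarrow> 'a mpoly set" where
  "Qeq s x y = {F \<in> Vcarrier s. rees_map s x y F = 0}"

definition Qdeg :: "nat \<Rightarrow> (nat \<Rightarrow> 'a::comm_ring_1) \<Rightarrow> 'a \<Rightarrow> nat \<Rightarrow> 'a mpoly set" where
  "Qdeg s x y n = Qeq s x y \<inter> Vdeg s n"

definition Qle :: "nat \<Rightarrow> (nat \<Rightarrow> 'a::comm_ring_1) \<Rightarrow> 'a \<Rightarrow> nat \<Rightarrow> 'a mpoly set" where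
  "Qle s x y n = Vgen s (\<Union>d\<in>{..n}. Qdeg s x y d)"

definition relation_type :: "nat \<Rightarrow> (nat \<Rightarrow> 'a::comm_ring_1) \<Rightarrow> 'a \<Rightarrow> nat" where
  "relation_type s x y = (LEAST N. N \<ge> 1 \<and> Qeq s x y = Qle s x y N)"

definition is_reduction :: "'a::comm_ring_1 set \<Rightarrow> 'a set \<Rightarrow> bool" where
  "is_reduction J I \<longleftrightarrow> J \<subseteq> I \<and> (\<exists>m. ideal_pow I (Suc m) = ideal_prod J (ideal_pow I m))"

definition reduction_number :: "'a::comm_ring_1 set \<Rightarrow> 'a set \<Rightarrow> nat" where
  "reduction_number J I = (LEAST m. ideal_pow I (Suc m) = ideal_prod J (ideal_pow I m))"

end

theory Submission
  imports Defs
begin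

text \<open>A form F in Q_n splits as F = c Y^n + sum_i X_i K_i with c = F(0,...,0,1); evaluating at (x, y)
  gives c y^n in J I^(n-1), and conversely every such c comes from a form of this shape. The crux is
  that F already lies in Q<n-1> once c y^(n-1) is in J I^(n-2): subtracting Y times an equation of
  degree n-1 leaves a linear syzygy sum_i X_i K_i, and such a syzygy is moved into Q<n-1> one
  coefficient at a time. The value of the last coefficient K_k lies in (x_0, ..., x_(k-1)) because the
  x_i form an R-sequence, hence in (x_0, ..., x_(k-1)) I^(n-2) by Valla's lemma (the initial forms are
  G(I)-regular); lifting it to a form trades K_k for an equation of degree n-1.
  For the reduction number r, y^(r+1) in J I^r yields the form Y^(r+1) - sum_i X_i F_i, which generates
  Q modulo Q<r> and, since y^r is not in J I^(r-1), does not lie in Q<r>; hence rt(I) = r + 1.\<close>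

lemma sum_keys_superset:
  assumes "finite A" "Poly_Mapping.keys f \<subseteq> A" "\<And>k. g k 0 = 0"
  shows "(\<Sum>k\<in>Poly_Mapping.keys f. g k (Poly_Mapping.lookup f k)) = (\<Sum>k\<in>A. g k (Poly_Mapping.lookup f k))"
  by (rule sum.mono_neutral_left) (use assms in \<open>auto simp: in_keys_iff\<close>)

lemma prod_keys_superset:
  assumes "finite A" "Poly_Mapping.keys f \<subseteq> A" "\<And>k. g k 0 = 1"
  shows "(\<Prod>k\<in>Poly_Mapping.keys f. g k (Poly_Mapping.lookup f k)) = (\<Prod>k\<in>A. g k (Poly_Mapping.lookup f k))"
  by (rule prod.mono_neutral_left) (use assms in \<open>auto simp: in_keys_iff\<close>)

lemma poly_mapping_sum_singles:
  "F = (\<Sum>m\<in>Poly_Mapping.keys F. Poly_Mapping.single m (Poly_Mapping.lookup F m))"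
  by (rule poly_mapping_eqI) (simp add: lookup_sum lookup_single when_def in_keys_iff sum.delta)

lemma keys_add_nat:
  "Poly_Mapping.keys ((a::'b \<Rightarrow>\<^sub>0 nat) + b) = Poly_Mapping.keys a \<union> Poly_Mapping.keys b"
  by (auto simp: in_keys_iff lookup_add)

subsection \<open>Evaluation homomorphisms on polynomials\<close>

text \<open>Both meval and rees_map have this shape: a ring map on coefficients times a multiplicative
  function on monomials.\<close>

definition mpoly_hom :: "('a::comm_ring_1 \<Rightarrow> 'b::comm_ring_1) \<Rightarrow> ((nat \<Rightarrow>\<^sub>0 nat) \<Rightarrow> 'b) \<Rightarrow> 'a mpoly \<Rightarrow> 'b" where
  "mpoly_hom \<phi> h F = (\<Sum>mon\<in>Poly_Mapping.keys F. \<phi> (Poly_Mapping.lookup F mon) * h mon)"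

lemma mpoly_hom_add:
  assumes "\<phi> 0 = 0" "\<And>a b. \<phi> (a + b) = \<phi> a + \<phi> b"
  shows "mpoly_hom \<phi> h (F + G) = mpoly_hom \<phi> h F + mpoly_hom \<phi> h G"
proof -
  let ?A = "Poly_Mapping.keys F \<union> Poly_Mapping.keys G"
  have "\<And>H. Poly_Mapping.keys H \<subseteq> ?A \<Longrightarrow>
      mpoly_hom \<phi> h H = (\<Sum>mon\<in>?A. \<phi> (Poly_Mapping.lookup H mon) * h mon)"
    unfolding mpoly_hom_def by (rule sum_keys_superset) (use assms(1) in auto)
  then show ?thesis
    using keys_add[of F G] by (simp add: lookup_add assms(2) distrib_right sum.distrib)
qed

lemma mpoly_hom_0 [simp]: "mpoly_hom \<phi> h 0 = 0"
  by (simp add: mpoly_hom_def)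

lemma mpoly_hom_sum:
  assumes "\<phi> 0 = 0" "\<And>a b. \<phi> (a + b) = \<phi> a + \<phi> b"
  shows "mpoly_hom \<phi> h (sum P S) = (\<Sum>i\<in>S. mpoly_hom \<phi> h (P i))"
  by (induction S rule: infinite_finite_induct) (auto simp: mpoly_hom_add[OF assms])

lemma mpoly_hom_single:
  "\<phi> 0 = 0 \<Longrightarrow> mpoly_hom \<phi> h (Poly_Mapping.single m c) = \<phi> c * h m"
  by (simp add: mpoly_hom_def)

lemma mpoly_hom_mult:
  assumes "\<phi> 0 = 0" "\<And>a b. \<phi> (a + b) = \<phi> a + \<phi> b" "\<And>a b. \<phi> (a * b) = \<phi> a * \<phi> b"
    and h: "\<And>m1 m2. h (m1 + m2) = h m1 * h m2"
  shows "mpoly_hom \<phi> h (F * G) = mpoly_hom \<phi> h F * mpoly_hom \<phi> h G"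
proof -
  have "F * G = (\<Sum>m\<in>Poly_Mapping.keys F. \<Sum>n\<in>Poly_Mapping.keys G.
        Poly_Mapping.single (m + n) (Poly_Mapping.lookup F m * Poly_Mapping.lookup G n))"
    by (subst poly_mapping_sum_singles[of F], subst poly_mapping_sum_singles[of G])
       (simp add: sum_product mult_single)
  then have "mpoly_hom \<phi> h (F * G) = (\<Sum>m\<in>Poly_Mapping.keys F. \<Sum>n\<in>Poly_Mapping.keys G.
        (\<phi> (Poly_Mapping.lookup F m) * h m) * (\<phi> (Poly_Mapping.lookup G n) * h n))"
    by (simp add: mpoly_hom_sum[OF assms(1,2)] mpoly_hom_single assms(1,3) h mult_ac)
  then show ?thesis
    by (simp add: mpoly_hom_def sum_product)
qed

definition mon_eval :: "(nat \<Rightarrow> 'a::comm_ring_1) \<Rightarrow> (nat \<Rightarrow>\<^sub>0 nat) \<Rightarrow> 'a" where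
  "mon_eval f mon = (\<Prod>i\<in>Poly_Mapping.keys mon. f i ^ Poly_Mapping.lookup mon i)"

lemma mon_eval_add: "mon_eval f (m1 + m2) = mon_eval f m1 * mon_eval f m2"
proof -
  let ?A = "Poly_Mapping.keys m1 \<union> Poly_Mapping.keys m2"
  have "\<And>m. Poly_Mapping.keys m \<subseteq> ?A \<Longrightarrow>
      mon_eval f m = (\<Prod>i\<in>?A. f i ^ Poly_Mapping.lookup m i)"
    unfolding mon_eval_def by (rule prod_keys_superset) auto
  then show ?thesis
    by (simp add: keys_add_nat lookup_add power_add prod.distrib)
qed

lemma mdeg_add: "mdeg (m1 + m2) = mdeg m1 + mdeg m2"
proof -
  let ?A = "Poly_Mapping.keys m1 \<union> Poly_Mapping.keys m2"
  have "\<And>m. Poly_Mapping.keys m \<subseteq> ?A \<Longrightarrow> mdeg m = (\<Sum>i\<in>?A. Poly_Mapping.lookup m i)"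
    unfolding mdeg_def by (rule sum_keys_superset) auto
  then show ?thesis
    by (simp add: keys_add_nat lookup_add sum.distrib)
qed

lemma mdeg_single [simp]: "mdeg (Poly_Mapping.single i k) = k"
  by (simp add: mdeg_def)

lemma mdeg_0 [simp]: "mdeg 0 = 0"
  by (simp add: mdeg_def)

lemma mdeg_eq_0_iff [simp]: "mdeg mon = 0 \<longleftrightarrow> mon = 0"
  by (auto simp: mdeg_def in_keys_iff intro!: poly_mapping_eqI)

lemma meval_eq_mpoly_hom: "meval f = mpoly_hom id (mon_eval f)"
  by (simp add: fun_eq_iff meval_def mpoly_hom_def mon_eval_def)

lemma meval_add: "meval f (F + G) = meval f F + meval f G"
  unfolding meval_eq_mpoly_hom by (rule mpoly_hom_add) auto

lemma meval_mult: "meval f (F * G) = meval f F * meval f G"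
  unfolding meval_eq_mpoly_hom by (rule mpoly_hom_mult) (auto simp: mon_eval_add)

lemma meval_0 [simp]: "meval f 0 = 0"
  by (simp add: meval_eq_mpoly_hom)

lemma meval_sum: "meval f (sum P S) = (\<Sum>i\<in>S. meval f (P i))"
  unfolding meval_eq_mpoly_hom by (rule mpoly_hom_sum) auto

lemma meval_diff: "meval f (F - G) = meval f F - meval f G"
  using meval_add[of f "F - G" G] by (simp add: algebra_simps)

lemma meval_single: "meval f (Poly_Mapping.single m c) = c * mon_eval f m"
  by (simp add: meval_eq_mpoly_hom mpoly_hom_single)

lemma meval_Const [simp]: "meval f (Const c) = c"
  by (simp add: Const_def meval_single mon_eval_def)

lemma meval_Var [simp]: "meval f (Var i) = f i"
  by (simp add: Var_def meval_single mon_eval_def)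

lemma Const_1 [simp]: "Const 1 = 1"
  by (simp add: Const_def single_one)

lemma meval_power: "meval f (F ^ n) = meval f F ^ n"
  by (induction n) (auto simp: meval_mult simp flip: Const_1)

lemma rees_map_eq_mpoly_hom:
  "rees_map s x y = mpoly_hom (\<lambda>c. monom c 0) (\<lambda>mon. monom (mon_eval (gens s x y) mon) (mdeg mon))"
  by (simp add: fun_eq_iff rees_map_def mpoly_hom_def mon_eval_def mult_monom)

lemma rees_map_0 [simp]: "rees_map s x y 0 = 0"
  by (simp add: rees_map_def)

lemma rees_map_add: "rees_map s x y (F + G) = rees_map s x y F + rees_map s x y G"
  unfolding rees_map_eq_mpoly_hom by (rule mpoly_hom_add) (auto simp: add_monom)

lemma rees_map_mult: "rees_map s x y (F * G) = rees_map s x y F * rees_map s x y G"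
  unfolding rees_map_eq_mpoly_hom
  by (rule mpoly_hom_mult) (auto simp: add_monom mult_monom mon_eval_add mdeg_add)

subsection \<open>The graded polynomial ring \<open>V\<close>\<close>

lemma Vcarrier_iff:
  "F \<in> Vcarrier s \<longleftrightarrow> (\<forall>mon\<in>Poly_Mapping.keys F. Poly_Mapping.keys mon \<subseteq> {..s})"
  by (simp add: Vcarrier_def)

lemma Vdeg_iff:
  "F \<in> Vdeg s n \<longleftrightarrow> (\<forall>mon\<in>Poly_Mapping.keys F. Poly_Mapping.keys mon \<subseteq> {..s} \<and> mdeg mon = n)"
  by (auto simp: Vdeg_def Vcarrier_def homog_def)

lemma Vcarrier_add: "F \<in> Vcarrier s \<Longrightarrow> G \<in> Vcarrier s \<Longrightarrow> F + G \<in> Vcarrier s"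
  using keys_add[of F G] unfolding Vcarrier_iff by blast

lemma Vcarrier_mult: "F \<in> Vcarrier s \<Longrightarrow> G \<in> Vcarrier s \<Longrightarrow> F * G \<in> Vcarrier s"
  using keys_mult[of F G] unfolding Vcarrier_iff by (fastforce simp: keys_add_nat)

lemma Vcarrier_Const [simp]: "Const c \<in> Vcarrier s"
  by (simp add: Vcarrier_iff Const_def)

lemma Vcarrier_0 [simp]: "0 \<in> Vcarrier s" and Vcarrier_1 [simp]: "1 \<in> Vcarrier s"
  using Vcarrier_Const[of 0 s] Vcarrier_Const[of 1 s] by (simp_all add: Const_def)

lemma Vcarrier_Var: "i \<le> s \<Longrightarrow> Var i \<in> Vcarrier s"
  by (simp add: Vcarrier_iff Var_def)

lemma Vdeg_add: "F \<in> Vdeg s n \<Longrightarrow> G \<in> Vdeg s n \<Longrightarrow> F + G \<in> Vdeg s n"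
  using keys_add[of F G] unfolding Vdeg_iff by blast

lemma Vdeg_diff: "F \<in> Vdeg s n \<Longrightarrow> G \<in> Vdeg s n \<Longrightarrow> F - G \<in> Vdeg s n"
  using keys_diff[of F G] unfolding Vdeg_iff by blast

lemma Vdeg_mult: "F \<in> Vdeg s n \<Longrightarrow> G \<in> Vdeg s m \<Longrightarrow> F * G \<in> Vdeg s (n + m)"
  using keys_mult[of F G] unfolding Vdeg_iff by (fastforce simp: keys_add_nat mdeg_add)

lemma Vdeg_0_zero [simp]: "0 \<in> Vdeg s n"
  by (simp add: Vdeg_iff)

lemma Vdeg_Const [simp]: "Const c \<in> Vdeg s 0"
  by (simp add: Vdeg_iff Const_def)

lemma Vdeg_Var: "i \<le> s \<Longrightarrow> Var i \<in> Vdeg s 1"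
  by (simp add: Vdeg_iff Var_def)

lemma Vdeg_sum: "(\<And>i. i \<in> A \<Longrightarrow> P i \<in> Vdeg s n) \<Longrightarrow> sum P A \<in> Vdeg s n"
  by (induction A rule: infinite_finite_induct) (auto intro: Vdeg_add)

lemma Vdeg_power: "F \<in> Vdeg s 1 \<Longrightarrow> F ^ n \<in> Vdeg s n"
  by (induction n) (auto simp flip: Const_1 dest: Vdeg_mult)

lemma Vdeg_Const_mult: "F \<in> Vdeg s n \<Longrightarrow> Const c * F \<in> Vdeg s n"
  using Vdeg_mult[of "Const c" s 0 F n] by simp

lemma Vdeg_Var_mult: "i \<le> s \<Longrightarrow> F \<in> Vdeg s n \<Longrightarrow> Var i * F \<in> Vdeg s (Suc n)"
  using Vdeg_mult[OF Vdeg_Var] by fastforce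

lemma Vdeg_lin_comb:
  "(\<And>i. i < k \<Longrightarrow> K i \<in> Vdeg s n) \<Longrightarrow> k \<le> Suc s \<Longrightarrow> (\<Sum>i<k. Var i * K i) \<in> Vdeg s (Suc n)"
  by (rule Vdeg_sum) (auto intro: Vdeg_Var_mult)

lemma Vdeg_0_eq_Const: "F \<in> Vdeg s 0 \<Longrightarrow> F = Const (meval f F)"
proof -
  assume "F \<in> Vdeg s 0"
  then have "Poly_Mapping.keys F \<subseteq> {0}"
    by (auto simp: Vdeg_iff mdeg_eq_0_iff)
  then have F: "F = Const (Poly_Mapping.lookup F 0)"
    by (subst poly_mapping_sum_singles)
       (auto simp: Const_def in_keys_iff subset_singleton_iff)
  then show ?thesis
    by (metis meval_Const)
qed

lemma Vdeg_Suc_decomp: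
  fixes F :: "'a::comm_ring_1 mpoly"
  assumes F: "F \<in> Vdeg s (Suc n)"
  shows "\<exists>K. (\<forall>i\<le>s. K i \<in> Vdeg s n) \<and> F = (\<Sum>i\<le>s. Var i * K i)"
proof -
  define decomposable :: "'a mpoly \<Rightarrow> bool" where
    "decomposable G \<longleftrightarrow> (\<exists>K. (\<forall>i\<le>s. K i \<in> Vdeg s n) \<and> G = (\<Sum>i\<le>s. Var i * K i))" for G
  have add: "decomposable (G + H)" if "decomposable G" "decomposable H" for G H
  proof -
    from that obtain K L where "\<forall>i\<le>s. K i \<in> Vdeg s n" "G = (\<Sum>i\<le>s. Var i * K i)"
      "\<forall>i\<le>s. L i \<in> Vdeg s n" "H = (\<Sum>i\<le>s. Var i * L i)"
      unfolding decomposable_def by blast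
    then show ?thesis
      unfolding decomposable_def
      by (intro exI[of _ "\<lambda>i. K i + L i"]) (simp add: Vdeg_add distrib_left sum.distrib)
  qed
  have monomial: "decomposable (Poly_Mapping.single mon c)" if mon: "mon \<in> Poly_Mapping.keys F" for mon c
  proof -
    from F mon have keys: "Poly_Mapping.keys mon \<subseteq> {..s}" and deg: "mdeg mon = Suc n"
      by (auto simp: Vdeg_iff)
    then have "mon \<noteq> 0"
      by auto
    then obtain i where i: "i \<in> Poly_Mapping.keys mon"
      by (metis keys_eq_empty ex_in_conv)
    define rest where "rest = mon - Poly_Mapping.single i (1::nat)"
    have split: "mon = Poly_Mapping.single i 1 + rest"
      using i by (auto simp: rest_def in_keys_iff lookup_add lookup_minus lookup_single when_def
          intro!: poly_mapping_eqI)
    have "Poly_Mapping.keys rest \<subseteq> {..s}"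
      using keys split by (simp add: keys_add_nat)
    moreover have "mdeg rest = n"
      using deg split by (simp add: mdeg_add)
    ultimately have "Poly_Mapping.single rest c \<in> Vdeg s n"
      by (simp add: Vdeg_iff)
    moreover have "Poly_Mapping.single mon c = Var i * Poly_Mapping.single rest c"
      by (simp add: Var_def mult_single split)
    ultimately show ?thesis
      unfolding decomposable_def using i keys
      by (intro exI[of _ "\<lambda>j. if j = i then Poly_Mapping.single rest c else 0"])
         (auto simp: if_distrib sum.delta cong: if_cong)
  qed
  have "decomposable (\<Sum>mon\<in>A. Poly_Mapping.single mon (Poly_Mapping.lookup F mon))"
    if "A \<subseteq> Poly_Mapping.keys F" for A
    using finite_subset[OF that finite_keys] that
  proof (induction A rule: finite_induct)
    case empty
    show ?case
      unfolding decomposable_def by (intro exI[of _ "\<lambda>_. 0"]) simp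
  next
    case (insert mon A)
    then show ?case by (simp add: add monomial)
  qed
  from this[OF order_refl] show ?thesis
    unfolding decomposable_def by (simp flip: poly_mapping_sum_singles)
qed

definition y_point :: "nat \<Rightarrow> nat \<Rightarrow> 'a::comm_ring_1" where
  "y_point s i = (if i < s then 0 else 1)"

lemma y_point_eq_1 [simp]: "y_point s s = 1"
  by (simp add: y_point_def)

lemma meval_y_point_lin_comb [simp]: "meval (y_point s) (\<Sum>i<s. Var i * K i) = 0"
  by (simp add: meval_sum meval_mult y_point_def)

lemma meval_y_point_Var_power [simp]: "meval (y_point s) (Var s ^ n) = 1"
  by (simp add: meval_power y_point_def)

lemma Vdeg_decomp_Y:
  assumes "F \<in> Vdeg s n"
  shows "\<exists>K. (\<forall>i<s. K i \<in> Vdeg s (n - 1))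
    \<and> F = Const (meval (y_point s) F) * Var s ^ n + (\<Sum>i<s. Var i * K i)"
  using assms
proof (induction n arbitrary: F)
  case 0
  then show ?case
    using Vdeg_0_eq_Const by (intro exI[of _ "\<lambda>_. 0"]) auto
next
  case (Suc n)
  obtain K where K: "\<forall>i\<le>s. K i \<in> Vdeg s n" "F = (\<Sum>i\<le>s. Var i * K i)"
    using Vdeg_Suc_decomp[OF Suc.prems] by blast
  have "\<exists>L. (\<forall>i<s. Var s * L i \<in> Vdeg s n)
      \<and> K s = Const (meval (y_point s) (K s)) * Var s ^ n + (\<Sum>i<s. Var i * L i)"
  proof (cases n)
    case 0
    then show ?thesis
      using Vdeg_0_eq_Const K(1) by (intro exI[of _ "\<lambda>_. 0"]) auto
  next
    case (Suc m)
    then show ?thesis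
      using Suc.IH[of "K s"] K(1) Vdeg_Var_mult[of s s _ m] by fastforce
  qed
  then obtain L where L: "\<forall>i<s. Var s * L i \<in> Vdeg s n"
    "K s = Const (meval (y_point s) (K s)) * Var s ^ n + (\<Sum>i<s. Var i * L i)"
    by blast
  define c where "c = meval (y_point s) (K s)"
  have "F = Var s * K s + (\<Sum>i<s. Var i * K i)"
    using K(2) by (simp add: lessThan_Suc_atMost[symmetric])
  also have "\<dots> = Const c * Var s ^ Suc n + (\<Sum>i<s. Var i * (K i + Var s * L i))"
    by (subst L(2)) (simp add: c_def algebra_simps sum.distrib sum_distrib_left)
  finally have F: "F = \<dots>" .
  moreover have "meval (y_point s) F = c"
    by (subst F) (simp add: meval_add meval_mult)
  moreover have "\<forall>i<s. K i + Var s * L i \<in> Vdeg s n"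
    using K(1) L(1) by (auto intro!: Vdeg_add)
  ultimately show ?case
    by (intro exI[of _ "\<lambda>i. K i + Var s * L i"]) simp
qed

subsection \<open>Ideals of \<open>R\<close>\<close>

lemma
  assumes "is_ideal A"
  shows ideal_zero: "0 \<in> A"
    and ideal_add: "a \<in> A \<Longrightarrow> b \<in> A \<Longrightarrow> a + b \<in> A"
    and ideal_mult_left: "a \<in> A \<Longrightarrow> r * a \<in> A"
  using assms unfolding is_ideal_def by blast+

lemma ideal_mult_right: "is_ideal A \<Longrightarrow> a \<in> A \<Longrightarrow> a * r \<in> A"
  using ideal_mult_left[of A a r] by (simp add: mult.commute)

lemma ideal_uminus: "is_ideal A \<Longrightarrow> a \<in> A \<Longrightarrow> - a \<in> A"
  using ideal_mult_left[of A a "-1"] by simp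

lemma ideal_diff: "is_ideal A \<Longrightarrow> a \<in> A \<Longrightarrow> b \<in> A \<Longrightarrow> a - b \<in> A"
  using ideal_add[of A a "- b"] ideal_uminus[of A b] by simp

lemma ideal_sum: "is_ideal A \<Longrightarrow> (\<And>i. i \<in> T \<Longrightarrow> f i \<in> A) \<Longrightarrow> sum f T \<in> A"
  by (induction T rule: infinite_finite_induct) (auto intro: ideal_zero ideal_add)

lemma is_ideal_UNIV [simp]: "is_ideal UNIV"
  by (simp add: is_ideal_def)

lemma is_ideal_colon: "is_ideal A \<Longrightarrow> is_ideal (colon A b)"
  unfolding is_ideal_def colon_def by (auto simp: distrib_right mult.assoc)

lemma zero_in_colon: "is_ideal A \<Longrightarrow> 0 \<in> colon A b"
  by (simp add: colon_def ideal_zero)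

lemma gen_idealI: "(\<forall>i<k. g i \<in> S) \<Longrightarrow> a = (\<Sum>i<(k::nat). c i * g i) \<Longrightarrow> a \<in> gen_ideal S"
  unfolding gen_ideal_def by blast

lemma gen_idealE:
  "a \<in> gen_ideal S \<Longrightarrow> (\<And>(k::nat) c g. \<forall>i<k. g i \<in> S \<Longrightarrow> a = (\<Sum>i<k. c i * g i) \<Longrightarrow> P) \<Longrightarrow> P"
  unfolding gen_ideal_def by blast

lemma sum_lessThan_add_split:
  "(\<Sum>i<(k::nat) + l. f i) = (\<Sum>i<k. f i) + (\<Sum>i<l. f (k + i))"
  by (induction l) (simp_all add: add.assoc)

lemma is_ideal_gen_ideal: "is_ideal (gen_ideal S)"
  unfolding is_ideal_def
proof (intro conjI ballI allI)
  show "0 \<in> gen_ideal S"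
    by (rule gen_idealI[of 0]) auto
next
  fix a b assume "a \<in> gen_ideal S" "b \<in> gen_ideal S"
  obtain k :: nat and c g where a: "\<forall>i<k. g i \<in> S" "a = (\<Sum>i<k. c i * g i)"
    using \<open>a \<in> gen_ideal S\<close> by (rule gen_idealE)
  obtain l :: nat and d h where b: "\<forall>i<l. h i \<in> S" "b = (\<Sum>i<l. d i * h i)"
    using \<open>b \<in> gen_ideal S\<close> by (rule gen_idealE)
  show "a + b \<in> gen_ideal S"
    by (rule gen_idealI[of "k + l" "\<lambda>i. if i < k then g i else h (i - k)" _ _
          "\<lambda>i. if i < k then c i else d (i - k)"])
       (use a b in \<open>auto simp: sum_lessThan_add_split\<close>)
next
  fix r a assume "a \<in> gen_ideal S"
  then obtain k :: nat and c g where "\<forall>i<k. g i \<in> S" "a = (\<Sum>i<k. c i * g i)"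
    by (rule gen_idealE)
  then show "r * a \<in> gen_ideal S"
    by (intro gen_idealI[of k g S _ "\<lambda>i. r * c i"]) (simp_all add: sum_distrib_left mult.assoc)
qed

lemma gen_ideal_base: "u \<in> S \<Longrightarrow> u \<in> gen_ideal S"
  by (rule gen_idealI[of 1 "\<lambda>_. u" S _ "\<lambda>_. 1"]) auto

lemma gen_ideal_least: "S \<subseteq> A \<Longrightarrow> is_ideal A \<Longrightarrow> gen_ideal S \<subseteq> A"
  unfolding gen_ideal_def by (auto intro!: ideal_sum ideal_mult_left)

lemma gen_ideal_mult_closed:
  assumes "p \<in> gen_ideal S" "\<And>u. u \<in> S \<Longrightarrow> u * q \<in> A" "is_ideal A"
  shows "p * q \<in> A"
proof -
  obtain k :: nat and c g where "\<forall>i<k. g i \<in> S" "p = (\<Sum>i<k. c i * g i)"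
    using assms(1) by (rule gen_idealE)
  then have "p * q = (\<Sum>i<k. c i * (g i * q))"
    by (simp add: sum_distrib_right mult.assoc)
  also have "\<dots> \<in> A"
    by (rule ideal_sum[OF assms(3)], rule ideal_mult_left[OF assms(3)])
       (use \<open>\<forall>i<k. g i \<in> S\<close> assms(2) in auto)
  finally show ?thesis .
qed

lemma is_ideal_ideal_prod: "is_ideal (ideal_prod A B)"
  unfolding ideal_prod_def by (rule is_ideal_gen_ideal)

lemma ideal_prod_mem: "a \<in> A \<Longrightarrow> b \<in> B \<Longrightarrow> a * b \<in> ideal_prod A B"
  unfolding ideal_prod_def by (rule gen_ideal_base) blast

lemma ideal_prod_least:
  "(\<And>a b. a \<in> A \<Longrightarrow> b \<in> B \<Longrightarrow> a * b \<in> C) \<Longrightarrow> is_ideal C \<Longrightarrow> ideal_prod A B \<subseteq> C"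
  unfolding ideal_prod_def by (rule gen_ideal_least) auto

lemma is_ideal_ideal_pow: "is_ideal (ideal_pow I n)"
  by (cases n) (auto intro: is_ideal_ideal_prod)

lemma zero_in_ideal_prod [simp]: "0 \<in> ideal_prod A B"
  by (rule ideal_zero[OF is_ideal_ideal_prod])

lemma ideal_pow_mult:
  assumes "is_ideal I" "a \<in> ideal_pow I p" "b \<in> ideal_pow I q"
  shows "a * b \<in> ideal_pow I (p + q)"
  using assms(2)
proof (induction p arbitrary: a)
  case 0
  then show ?case
    using ideal_mult_left[OF is_ideal_ideal_pow assms(3)] by simp
next
  case (Suc p)
  have "a * b \<in> ideal_prod I (ideal_pow I (p + q))"
  proof (rule gen_ideal_mult_closed[of a])
    show "a \<in> gen_ideal {u * v |u v. u \<in> I \<and> v \<in> ideal_pow I p}"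
      using Suc.prems by (simp add: ideal_prod_def)
    fix w assume "w \<in> {u * v |u v. u \<in> I \<and> v \<in> ideal_pow I p}"
    then obtain u v where "w = u * v" "u \<in> I" "v \<in> ideal_pow I p"
      by blast
    then show "w * b \<in> ideal_prod I (ideal_pow I (p + q))"
      using Suc.IH[of v] ideal_prod_mem[of u I "v * b"] by (simp add: mult.assoc)
  qed (rule is_ideal_ideal_prod)
  then show ?case
    by simp
qed

lemma ideal_pow_Suc_subset: "is_ideal I \<Longrightarrow> ideal_pow I (Suc n) \<subseteq> ideal_pow I n"
  by (simp, rule ideal_prod_least) (auto intro: ideal_mult_left is_ideal_ideal_pow)

lemma ideal_pow_antimono:
  assumes "is_ideal I" "m \<le> n"
  shows "ideal_pow I n \<subseteq> ideal_pow I m"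
  using assms(2) by (induction n rule: dec_induct) (use ideal_pow_Suc_subset[OF assms(1)] in blast)+

lemma power_in_ideal_pow: "is_ideal I \<Longrightarrow> a \<in> I \<Longrightarrow> a ^ n \<in> ideal_pow I n"
  by (induction n) (auto intro: ideal_prod_mem)

lemma ideal_pow_1: "is_ideal I \<Longrightarrow> ideal_pow I 1 = I"
  using ideal_prod_mem[of _ I 1 UNIV] ideal_prod_least[of I UNIV I] ideal_mult_right[of I]
  by auto

definition lin_comb :: "(nat \<Rightarrow> 'a::comm_ring_1) \<Rightarrow> nat \<Rightarrow> 'a set \<Rightarrow> 'a set" where
  "lin_comb x k A = {a. \<exists>e. (\<forall>i<k. e i \<in> A) \<and> a = (\<Sum>i<k. x i * e i)}"

lemma lin_combI: "(\<And>i. i < k \<Longrightarrow> e i \<in> A) \<Longrightarrow> (\<Sum>i<k. x i * e i) \<in> lin_comb x k A"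
  unfolding lin_comb_def by blast

lemma lin_combE:
  "a \<in> lin_comb x k A \<Longrightarrow> (\<And>e. \<forall>i<k. e i \<in> A \<Longrightarrow> a = (\<Sum>i<k. x i * e i) \<Longrightarrow> P) \<Longrightarrow> P"
  unfolding lin_comb_def by blast

lemma is_ideal_lin_comb:
  assumes A: "is_ideal A"
  shows "is_ideal (lin_comb x k A)"
  unfolding is_ideal_def
proof (intro conjI ballI allI)
  show "0 \<in> lin_comb x k A"
    using lin_combI[of k "\<lambda>_. 0" A x] ideal_zero[OF A] by simp
next
  fix a b assume "a \<in> lin_comb x k A" "b \<in> lin_comb x k A"
  then obtain e e' where "\<forall>i<k. e i \<in> A" "a = (\<Sum>i<k. x i * e i)"
    "\<forall>i<k. e' i \<in> A" "b = (\<Sum>i<k. x i * e' i)"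
    by (elim lin_combE) blast
  then show "a + b \<in> lin_comb x k A"
    using lin_combI[of k "\<lambda>i. e i + e' i" A x] ideal_add[OF A]
    by (simp add: distrib_left sum.distrib)
next
  fix r a assume "a \<in> lin_comb x k A"
  then obtain e where "\<forall>i<k. e i \<in> A" "a = (\<Sum>i<k. x i * e i)"
    by (rule lin_combE)
  then show "r * a \<in> lin_comb x k A"
    using lin_combI[of k "\<lambda>i. r * e i" A x] ideal_mult_left[OF A]
    by (simp add: sum_distrib_left mult.left_commute)
qed

lemma lin_comb_gen:
  assumes "i < k" "b \<in> A" "is_ideal A"
  shows "x i * b \<in> lin_comb x k A"
proof -
  have "(\<Sum>j<k. x j * (if j = i then b else 0)) \<in> lin_comb x k A"
    by (rule lin_combI) (use assms ideal_zero in auto)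
  then show ?thesis
    using assms(1) by (simp add: if_distrib cong: if_cong)
qed

lemma ideal_prod_gen_ideal_eq_lin_comb:
  assumes A: "is_ideal A"
  shows "ideal_prod (gen_ideal (x ` {..<k})) A = lin_comb x k A"
proof
  show "ideal_prod (gen_ideal (x ` {..<k})) A \<subseteq> lin_comb x k A"
  proof (rule ideal_prod_least[OF _ is_ideal_lin_comb[OF A]])
    fix a b assume "a \<in> gen_ideal (x ` {..<k})" "b \<in> A"
    then show "a * b \<in> lin_comb x k A"
      by (elim gen_ideal_mult_closed) (auto intro: lin_comb_gen A is_ideal_lin_comb)
  qed
  show "lin_comb x k A \<subseteq> ideal_prod (gen_ideal (x ` {..<k})) A"
    by (auto elim!: lin_combE intro!: ideal_sum[OF is_ideal_ideal_prod] ideal_prod_mem gen_ideal_base)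
qed

lemma gen_ideal_eq_lin_comb: "gen_ideal (x ` {..<k}) = lin_comb x k UNIV"
proof
  show "gen_ideal (x ` {..<k}) \<subseteq> lin_comb x k UNIV"
    by (rule gen_ideal_least) (use lin_comb_gen[of _ k 1 UNIV x] is_ideal_lin_comb[of UNIV] in auto)
  show "lin_comb x k UNIV \<subseteq> gen_ideal (x ` {..<k})"
  proof
    fix a assume "a \<in> lin_comb x k UNIV"
    then obtain e where "a = (\<Sum>i<k. x i * e i)"
      by (rule lin_combE)
    then show "a \<in> gen_ideal (x ` {..<k})"
      by (simp, intro ideal_sum[OF is_ideal_gen_ideal] ideal_mult_right[OF is_ideal_gen_ideal]
          gen_ideal_base) auto
  qed
qed

lemma lin_comb_SucI:
  assumes "c \<in> lin_comb x k A" "b \<in> A"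
  shows "c + x k * b \<in> lin_comb x (Suc k) A"
proof -
  obtain e where e: "\<forall>i<k. e i \<in> A" "c = (\<Sum>i<k. x i * e i)"
    using assms(1) by (rule lin_combE)
  have "(\<Sum>i<Suc k. x i * (if i < k then e i else b)) \<in> lin_comb x (Suc k) A"
    by (rule lin_combI) (use e(1) assms(2) in auto)
  then show ?thesis
    by (simp add: e(2))
qed

lemma lin_comb_SucE:
  assumes "a \<in> lin_comb x (Suc k) A"
  obtains c b where "c \<in> lin_comb x k A" "b \<in> A" "a = c + x k * b"
proof -
  obtain e where "\<forall>i<Suc k. e i \<in> A" "a = (\<Sum>i<Suc k. x i * e i)"
    using assms by (rule lin_combE)
  then show ?thesis
    by (intro that[of "\<Sum>i<k. x i * e i" "e k"]) (auto intro: lin_combI)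
qed

lemma lin_comb_mult_ideal_pow:
  assumes "is_ideal I" "a \<in> lin_comb x k (ideal_pow I p)" "b \<in> ideal_pow I q"
  shows "a * b \<in> lin_comb x k (ideal_pow I (p + q))"
proof -
  obtain e where e: "\<forall>i<k. e i \<in> ideal_pow I p" "a = (\<Sum>i<k. x i * e i)"
    using assms(2) by (rule lin_combE)
  then have "a * b = (\<Sum>i<k. x i * (e i * b))"
    by (simp add: sum_distrib_right mult.assoc)
  also have "\<dots> \<in> lin_comb x k (ideal_pow I (p + q))"
    by (rule lin_combI) (use e(1) assms(3) ideal_pow_mult[OF assms(1)] in auto)
  finally show ?thesis .
qed

subsection \<open>Regular sequences of initial forms\<close>

lemma Gmult_Gstar: "Gmult (Gstar a) g n = (if n = 0 then 0 else a * g (n - 1))"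
proof -
  have "Gmult (Gstar a) g n = (\<Sum>i\<le>n. if i = 1 then a * g (n - i) else 0)"
    unfolding Gmult_def Gstar_def by (rule sum.cong) auto
  then show ?thesis
    by (simp add: sum.delta')
qed

lemma Gelem_single_degree:
  assumes "is_ideal I" "b \<in> ideal_pow I j"
  shows "Gelem I (\<lambda>n. if n = j then b else 0)"
  using assms ideal_zero[OF is_ideal_ideal_pow] finite_subset[of "{n. (if n = j then b else 0) \<noteq> 0}" "{j}"]
  by (auto simp: Gelem_def)

text \<open>The relation \<open>rel\<close> says that x_k^* b^* lies in (x_0^*, ..., x_(k-1)^*) in degree j + 1
  of G(I); regularity of x_k^* lifts this to b^*.\<close>

lemma G_regular_lift:
  assumes I: "is_ideal I"
    and reg: "\<forall>g. Gelem I g \<longrightarrow> Gideal I x k (Gmult (Gstar (x k)) g) \<longrightarrow> Gideal I x k g"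
    and b: "b \<in> ideal_pow I j" and e: "\<forall>i<k. e i \<in> ideal_pow I j"
    and xb: "x k * b \<in> ideal_pow I (Suc j)"
    and rel: "x k * b + (\<Sum>i<k. x i * e i) \<in> ideal_pow I (Suc (Suc j))"
  obtains d where "b - (\<Sum>i<k. x i * d i) \<in> ideal_pow I (Suc j)"
proof -
  define g where "g = (\<lambda>n. if n = j then b else (0::'a))"
  define c where "c = (\<lambda>i n. if n = j then - e i else 0)"
  have xg: "Gmult (Gstar (x k)) g = (\<lambda>n. if n = Suc j then x k * b else 0)"
    by (rule ext) (auto simp: Gmult_Gstar g_def)
  have "Geq I (Gmult (Gstar (x k)) g) (\<lambda>n. \<Sum>i<k. Gmult (Gstar (x i)) (c i) n)"
    unfolding Geq_def
  proof
    fix n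
    show "Gmult (Gstar (x k)) g n - (\<Sum>i<k. Gmult (Gstar (x i)) (c i) n) \<in> ideal_pow I (Suc n)"
    proof (cases "n = Suc j")
      case True
      then show ?thesis
        using rel by (simp add: xg Gmult_Gstar c_def sum_negf)
    next
      case False
      then show ?thesis
        by (cases n) (simp_all add: xg Gmult_Gstar c_def)
    qed
  qed
  moreover have "Gelem I (Gmult (Gstar (x k)) g)"
    unfolding xg by (rule Gelem_single_degree[OF I xb])
  moreover have "\<forall>i<k. Gelem I (c i)"
    using e by (auto simp: c_def intro!: Gelem_single_degree[OF I] ideal_uminus[OF is_ideal_ideal_pow])
  ultimately have "Gideal I x k (Gmult (Gstar (x k)) g)"
    unfolding Gideal_def by blast
  moreover have "Gelem I g"
    unfolding g_def by (rule Gelem_single_degree[OF I b])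
  ultimately have "Gideal I x k g"
    using reg by blast
  then obtain c' where "Geq I g (\<lambda>n. \<Sum>i<k. Gmult (Gstar (x i)) (c' i) n)"
    unfolding Gideal_def by blast
  then have "g j - (\<Sum>i<k. Gmult (Gstar (x i)) (c' i) j) \<in> ideal_pow I (Suc j)"
    unfolding Geq_def by blast
  moreover have "(\<Sum>i<k. Gmult (Gstar (x i)) (c' i) j) = (\<Sum>i<k. x i * (if j = 0 then 0 else c' i (j - 1)))"
    by (rule sum.cong) (auto simp: Gmult_Gstar)
  ultimately show ?thesis
    by (intro that) (simp add: g_def)
qed

lemma lin_comb_Suc_deepen:
  assumes I: "is_ideal I" and xk: "x k \<in> I"
    and reg: "\<forall>g. Gelem I g \<longrightarrow> Gideal I x k (Gmult (Gstar (x k)) g) \<longrightarrow> Gideal I x k g"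
    and IH: "\<And>c. c \<in> lin_comb x k UNIV \<Longrightarrow> c \<in> ideal_pow I (Suc j) \<Longrightarrow> c \<in> lin_comb x k (ideal_pow I j)"
    and c: "c \<in> lin_comb x k UNIV" and b: "b \<in> ideal_pow I j"
    and a: "c + x k * b \<in> ideal_pow I (Suc (Suc j))"
  obtains c' b' where "c' \<in> lin_comb x k UNIV" "b' \<in> ideal_pow I (Suc j)" "c + x k * b = c' + x k * b'"
proof -
  have xb: "x k * b \<in> ideal_pow I (Suc j)"
    using ideal_pow_mult[OF I _ b, of "x k" 1] xk ideal_pow_1[OF I] by simp
  have "c \<in> ideal_pow I (Suc j)"
    using ideal_diff[OF is_ideal_ideal_pow, OF ideal_pow_Suc_subset[OF I, THEN subsetD, OF a] xb]
    by simp
  then obtain e where e: "\<forall>i<k. e i \<in> ideal_pow I j" "c = (\<Sum>i<k. x i * e i)"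
    using IH c by (blast elim: lin_combE)
  obtain d where d: "b - (\<Sum>i<k. x i * d i) \<in> ideal_pow I (Suc j)"
    by (rule G_regular_lift[OF I reg b e(1) xb]) (use a e(2) in \<open>simp add: add.commute\<close>)
  show ?thesis
  proof (rule that)
    show "(\<Sum>i<k. x i * (x k * d i)) + c \<in> lin_comb x k UNIV"
      by (rule ideal_add[OF is_ideal_lin_comb[OF is_ideal_UNIV] _ c], rule lin_combI) auto
    show "c + x k * b = (\<Sum>i<k. x i * (x k * d i)) + c + x k * (b - (\<Sum>i<k. x i * d i))"
      by (simp add: algebra_simps sum_distrib_left)
  qed (rule d)
qed

text \<open>Valla's lemma. For fixed k, the decomposition a = c + x_k b is pushed one degree deeper at a
  time.\<close>

theorem G_regular_inter_ideal_pow: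
  assumes I: "is_ideal I" and xI: "\<And>i. i < K \<Longrightarrow> x i \<in> I"
    and reg: "\<forall>i<K. \<forall>g. Gelem I g \<longrightarrow> Gideal I x i (Gmult (Gstar (x i)) g) \<longrightarrow> Gideal I x i g"
    and "k \<le> K" "a \<in> lin_comb x k UNIV" "a \<in> ideal_pow I (Suc m)"
  shows "a \<in> lin_comb x k (ideal_pow I m)"
  using assms(4-)
proof (induction k arbitrary: m a)
  case 0
  then show ?case
    by (simp add: lin_comb_def)
next
  case (Suc k)
  note outer_IH = Suc.IH and outer_prems = Suc.prems
  have kK: "k < K"
    using Suc.prems(1) by simp
  have split: "\<exists>c b. c \<in> lin_comb x k UNIV \<and> b \<in> ideal_pow I j \<and> a = c + x k * b" if "j \<le> m" for j
    using that
  proof (induction j)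
    case 0
    from Suc.prems(2) show ?case
      by (rule lin_comb_SucE) auto
  next
    case (Suc j)
    then obtain c b where cb: "c \<in> lin_comb x k UNIV" "b \<in> ideal_pow I j" "a = c + x k * b"
      by auto
    have "c + x k * b \<in> ideal_pow I (Suc (Suc j))"
      using ideal_pow_antimono[OF I, of "Suc (Suc j)" "Suc m"] Suc.prems outer_prems(3) cb(3)
      by auto
    moreover have "c \<in> lin_comb x k (ideal_pow I j)"
      if "c \<in> lin_comb x k UNIV" "c \<in> ideal_pow I (Suc j)" for c
      using outer_IH that kK by simp
    ultimately obtain c' b' where
      "c' \<in> lin_comb x k UNIV" "b' \<in> ideal_pow I (Suc j)" "c + x k * b = c' + x k * b'"
      using lin_comb_Suc_deepen[OF I xI[OF kK] _ _ cb(1,2)] reg kK by blast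
    then show ?case
      using cb(3) by auto
  qed
  obtain c b where cb: "c \<in> lin_comb x k UNIV" "b \<in> ideal_pow I m" "a = c + x k * b"
    using split[of m] by auto
  have "x k * b \<in> ideal_pow I (Suc m)"
    using ideal_pow_mult[OF I _ cb(2), of "x k" 1] xI[of k] Suc.prems(1) ideal_pow_1[OF I] by simp
  then have "c \<in> ideal_pow I (Suc m)"
    using ideal_diff[OF is_ideal_ideal_pow Suc.prems(3)] cb(3) by fastforce
  then have "c \<in> lin_comb x k (ideal_pow I m)"
    using outer_IH Suc.prems(1) cb(1) by simp
  then show ?case
    using cb(2,3) by (simp add: lin_comb_SucI)
qed

subsection \<open>The equations of the Rees algebra\<close>

lemma meval_gens_lin_comb:
  "k \<le> s \<Longrightarrow> meval (gens s x y) (\<Sum>i<k. Var i * K i) = (\<Sum>i<k. x i * meval (gens s x y) (K i))"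
  by (auto simp: meval_sum meval_mult gens_def intro!: sum.cong)

lemma gens_last [simp]: "gens s x y s = y"
  by (simp add: gens_def)

lemma meval_gens_Var_power [simp]: "meval (gens s x y) (Var s ^ n) = y ^ n"
  by (simp add: meval_power gens_def)

lemma rees_map_Vdeg:
  assumes "F \<in> Vdeg s n"
  shows "rees_map s x y F = monom (meval (gens s x y) F) n"
proof -
  have "rees_map s x y F = (\<Sum>mon\<in>Poly_Mapping.keys F. monom (Poly_Mapping.lookup F mon *
      (\<Prod>i\<in>Poly_Mapping.keys mon. gens s x y i ^ Poly_Mapping.lookup mon i)) n)"
    unfolding rees_map_def by (rule sum.cong) (use assms in \<open>auto simp: Vdeg_iff\<close>)
  then show ?thesis
    by (simp add: meval_def monom_sum)
qed

lemma Qdeg_iff: "F \<in> Qdeg s x y n \<longleftrightarrow> F \<in> Vdeg s n \<and> meval (gens s x y) F = 0"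
  by (auto simp: Qdeg_def Qeq_def rees_map_Vdeg Vdeg_def)

definition is_Videal :: "nat \<Rightarrow> 'a::comm_ring_1 mpoly set \<Rightarrow> bool" where
  "is_Videal s T \<longleftrightarrow> 0 \<in> T \<and> (\<forall>a\<in>T. \<forall>b\<in>T. a + b \<in> T) \<and> (\<forall>c\<in>Vcarrier s. \<forall>a\<in>T. c * a \<in> T)"

lemma
  assumes "is_Videal s T"
  shows Videal_zero: "0 \<in> T"
    and Videal_add: "a \<in> T \<Longrightarrow> b \<in> T \<Longrightarrow> a + b \<in> T"
    and Videal_mult: "c \<in> Vcarrier s \<Longrightarrow> a \<in> T \<Longrightarrow> c * a \<in> T"
  using assms unfolding is_Videal_def by blast+

lemma Videal_sum: "is_Videal s T \<Longrightarrow> (\<And>i. i \<in> A \<Longrightarrow> f i \<in> T) \<Longrightarrow> sum f A \<in> T"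
  by (induction A rule: infinite_finite_induct) (auto intro: Videal_zero Videal_add)

lemma VgenI: "\<forall>i<k. g i \<in> S \<and> c i \<in> Vcarrier s \<Longrightarrow> F = (\<Sum>i<(k::nat). c i * g i) \<Longrightarrow> F \<in> Vgen s S"
  unfolding Vgen_def by blast

lemma VgenE:
  "F \<in> Vgen s S \<Longrightarrow> (\<And>(k::nat) c g. \<forall>i<k. g i \<in> S \<and> c i \<in> Vcarrier s \<Longrightarrow> F = (\<Sum>i<k. c i * g i) \<Longrightarrow> P) \<Longrightarrow> P"
  unfolding Vgen_def by blast

lemma is_Videal_Vgen: "is_Videal s (Vgen s S)"
  unfolding is_Videal_def
proof (intro conjI ballI)
  show "0 \<in> Vgen s S"
    by (rule VgenI[of 0]) auto
next
  fix a b assume "a \<in> Vgen s S" "b \<in> Vgen s S"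
  obtain k :: nat and c g where a: "\<forall>i<k. g i \<in> S \<and> c i \<in> Vcarrier s" "a = (\<Sum>i<k. c i * g i)"
    using \<open>a \<in> Vgen s S\<close> by (rule VgenE)
  obtain l :: nat and d h where b: "\<forall>i<l. h i \<in> S \<and> d i \<in> Vcarrier s" "b = (\<Sum>i<l. d i * h i)"
    using \<open>b \<in> Vgen s S\<close> by (rule VgenE)
  show "a + b \<in> Vgen s S"
    by (rule VgenI[of "k + l" "\<lambda>i. if i < k then g i else h (i - k)" _
          "\<lambda>i. if i < k then c i else d (i - k)"])
       (use a b in \<open>auto simp: sum_lessThan_add_split\<close>)
next
  fix r a :: "'a mpoly" assume r: "r \<in> Vcarrier s" and "a \<in> Vgen s S"
  obtain k :: nat and c g where a: "\<forall>i<k. g i \<in> S \<and> c i \<in> Vcarrier s" "a = (\<Sum>i<k. c i * g i)"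
    using \<open>a \<in> Vgen s S\<close> by (rule VgenE)
  then show "r * a \<in> Vgen s S"
    using r by (intro VgenI[of k g S "\<lambda>i. r * c i"]) (auto intro: Vcarrier_mult simp: sum_distrib_left mult.assoc)
qed

lemma Vgen_base: "u \<in> S \<Longrightarrow> u \<in> Vgen s S"
  by (rule VgenI[of 1 "\<lambda>_. u" S "\<lambda>_. 1"]) auto

lemma Vgen_least: "S \<subseteq> T \<Longrightarrow> is_Videal s T \<Longrightarrow> Vgen s S \<subseteq> T"
  by (auto elim!: VgenE intro!: Videal_sum Videal_mult)

lemma Qdeg_subset_Qle: "d \<le> n \<Longrightarrow> Qdeg s x y d \<subseteq> Qle s x y n"
  unfolding Qle_def by (auto intro: Vgen_base)

lemma is_Videal_Qle: "is_Videal s (Qle s x y n)"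
  unfolding Qle_def by (rule is_Videal_Vgen)

lemma Qle_mono: "m \<le> n \<Longrightarrow> Qle s x y m \<subseteq> Qle s x y n"
  unfolding Qle_def[of s x y m]
  by (rule Vgen_least[OF _ is_Videal_Qle]) (meson UN_least atMost_iff le_trans Qdeg_subset_Qle)

lemma is_Videal_Qeq: "is_Videal s (Qeq s x y)"
  unfolding is_Videal_def Qeq_def by (auto intro: Vcarrier_add Vcarrier_mult simp: rees_map_add rees_map_mult)

lemma Qle_subset_Qeq: "Qle s x y n \<subseteq> Qeq s x y"
  unfolding Qle_def by (rule Vgen_least[OF _ is_Videal_Qeq]) (auto simp: Qdeg_def)

definition homog_comp :: "nat \<Rightarrow> 'a::comm_ring_1 mpoly \<Rightarrow> 'a mpoly" where
  "homog_comp d F = (\<Sum>mon\<in>{m\<in>Poly_Mapping.keys F. mdeg m = d}. Poly_Mapping.single mon (Poly_Mapping.lookup F mon))"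

lemma sum_homog_comp: "F = (\<Sum>d\<in>mdeg ` Poly_Mapping.keys F. homog_comp d F)"
  unfolding homog_comp_def by (subst sum.group) (auto intro: poly_mapping_sum_singles)

lemma rees_map_homog_comp: "rees_map s x y (homog_comp d F) = monom (coeff (rees_map s x y F) d) d"
proof -
  let ?S = "{m\<in>Poly_Mapping.keys F. mdeg m = d}"
  let ?t = "\<lambda>mon. Poly_Mapping.lookup F mon * mon_eval (gens s x y) mon"
  have "rees_map s x y (homog_comp d F) = (\<Sum>mon\<in>?S. monom (?t mon) d)"
    unfolding rees_map_eq_mpoly_hom homog_comp_def
    by (subst mpoly_hom_sum) (auto simp: add_monom mpoly_hom_single mult_monom intro!: sum.cong)
  also have "\<dots> = monom (\<Sum>mon\<in>?S. ?t mon) d"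
    by (simp add: monom_sum)
  also have "(\<Sum>mon\<in>?S. ?t mon) = coeff (rees_map s x y F) d"
    by (simp add: rees_map_def coeff_sum mon_eval_def coeff_monom sum.inter_filter)
  finally show ?thesis .
qed

lemma homog_comp_Qdeg: "F \<in> Qeq s x y \<Longrightarrow> homog_comp d F \<in> Qdeg s x y d"
  unfolding Qdeg_def Qeq_def Vdeg_def Vcarrier_iff homog_def
  using rees_map_homog_comp[of s x y d F]
  by (auto simp: homog_comp_def Vcarrier_iff dest!: subsetD[OF keys_sum] split: if_splits)

lemma relation_type_eqI:
  assumes "1 \<le> N" "Qeq s x y = Qle s x y N" "P \<in> Qeq s x y" "P \<notin> Qle s x y (N - 1)"
  shows "relation_type s x y = N"
  unfolding relation_type_def
proof (rule Least_equality)
  fix M assume "1 \<le> M \<and> Qeq s x y = Qle s x y M"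
  show "N \<le> M"
  proof (rule ccontr)
    assume "\<not> N \<le> M"
    then have "Qle s x y M \<subseteq> Qle s x y (N - 1)"
      by (intro Qle_mono) simp
    with \<open>1 \<le> M \<and> Qeq s x y = Qle s x y M\<close> assms(3,4) show False
      by blast
  qed
qed (use assms(1,2) in simp)

lemma minimal_gens_gen_ideal_neq:
  assumes "minimal_gens I s x y"
  shows "gen_ideal (x ` {..<s}) \<noteq> I"
proof
  assume "gen_ideal (x ` {..<s}) = I"
  then have "Suc s \<le> card (x ` {..<s})"
    using assms unfolding minimal_gens_def by blast
  with card_image_le[of "{..<s}" x] show False
    by simp
qed

lemma is_ideal_meval_Vdeg: "is_ideal (meval f ` Vdeg s n)"
  unfolding is_ideal_def
proof (intro conjI ballI allI)
  show "0 \<in> meval f ` Vdeg s n"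
    using Vdeg_0_zero by (rule rev_image_eqI) simp
  show "a + b \<in> meval f ` Vdeg s n" if "a \<in> meval f ` Vdeg s n" "b \<in> meval f ` Vdeg s n" for a b
  proof -
    from that obtain A B where "A \<in> Vdeg s n" "B \<in> Vdeg s n" "a = meval f A" "b = meval f B"
      by blast
    then show ?thesis
      by (metis image_eqI meval_add Vdeg_add)
  qed
  show "r * a \<in> meval f ` Vdeg s n" if "a \<in> meval f ` Vdeg s n" for r a
  proof -
    from that obtain A where "A \<in> Vdeg s n" "a = meval f A"
      by blast
    then show ?thesis
      by (metis image_eqI meval_mult meval_Const Vdeg_Const_mult)
  qed
qed

subsection \<open>Equations of degree \<open>n\<close> and the colon ideals \<open>(J I^(n-1) : y^n)\<close>\<close>

locale rees_generators =
  fixes s :: nat and x :: "nat \<Rightarrow> 'a::comm_ring_1" and y :: 'a and I :: "'a set"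
  assumes I_eq: "I = gen_ideal (insert y (x ` {..<s}))"
begin

lemma is_ideal_I: "is_ideal I"
  unfolding I_eq by (rule is_ideal_gen_ideal)

lemma gens_in_I: "gens s x y i \<in> I"
  unfolding I_eq gens_def by (rule gen_ideal_base) auto

lemma x_in_I: "i < s \<Longrightarrow> x i \<in> I"
  using gens_in_I[of i] by (simp add: gens_def)

lemma y_in_I: "y \<in> I"
  using gens_in_I[of s] by (simp add: gens_def)

lemma meval_Vdeg_in_ideal_pow: "G \<in> Vdeg s n \<Longrightarrow> meval (gens s x y) G \<in> ideal_pow I n"
proof (induction n arbitrary: G)
  case (Suc n)
  obtain K where K: "\<forall>i\<le>s. K i \<in> Vdeg s n" "G = (\<Sum>i\<le>s. Var i * K i)"
    using Vdeg_Suc_decomp[OF Suc.prems] by blast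
  then have "meval (gens s x y) G = (\<Sum>i\<le>s. gens s x y i * meval (gens s x y) (K i))"
    by (simp add: meval_sum meval_mult)
  also have "\<dots> \<in> ideal_pow I (Suc n)"
    using K(1) Suc.IH gens_in_I by (auto intro!: ideal_sum[OF is_ideal_ideal_prod] ideal_prod_mem)
  finally show ?case .
qed simp

lemma I_subset_meval_Vdeg_1: "I \<subseteq> meval (gens s x y) ` Vdeg s 1"
  unfolding I_eq
proof (rule gen_ideal_least[OF _ is_ideal_meval_Vdeg])
  have gens: "gens s x y i \<in> meval (gens s x y) ` Vdeg s 1" if "i \<le> s" for i
    using Vdeg_Var[OF that] by (auto intro!: image_eqI[of _ _ "Var i"])
  show "insert y (x ` {..<s}) \<subseteq> meval (gens s x y) ` Vdeg s 1"
  proof (intro insert_subsetI image_subsetI)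
    show "y \<in> meval (gens s x y) ` Vdeg s 1"
      using gens[of s] by simp
    show "x i \<in> meval (gens s x y) ` Vdeg s 1" if "i \<in> {..<s}" for i
      using gens[of i] that by (simp add: gens_def)
  qed
qed

lemma ideal_pow_eq_meval_Vdeg: "ideal_pow I n = meval (gens s x y) ` Vdeg s n"
proof (induction n)
  case 0
  show ?case
    using Vdeg_Const by (auto intro!: image_eqI[of _ _ "Const _"])
next
  case (Suc n)
  have "ideal_pow I (Suc n) \<subseteq> meval (gens s x y) ` Vdeg s (Suc n)"
  proof (simp only: ideal_pow.simps, rule ideal_prod_least[OF _ is_ideal_meval_Vdeg])
    fix u v assume "u \<in> I" "v \<in> ideal_pow I n"
    then obtain U V where "U \<in> Vdeg s 1" "V \<in> Vdeg s n" "u = meval (gens s x y) U" "v = meval (gens s x y) V"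
      using I_subset_meval_Vdeg_1 Suc.IH by blast
    then show "u * v \<in> meval (gens s x y) ` Vdeg s (Suc n)"
      using Vdeg_mult[of U s 1 V n] by (auto simp flip: meval_mult)
  qed
  then show ?case
    using meval_Vdeg_in_ideal_pow by blast
qed

lemma lin_comb_ideal_pow_lift:
  assumes "a \<in> lin_comb x k (ideal_pow I m)" "k \<le> s"
  obtains H where "\<forall>i<k. H i \<in> Vdeg s m" "a = meval (gens s x y) (\<Sum>i<k. Var i * H i)"
proof -
  obtain e where e: "\<forall>i<k. e i \<in> ideal_pow I m" "a = (\<Sum>i<k. x i * e i)"
    using assms(1) by (rule lin_combE)
  have "\<forall>i\<in>{..<k}. \<exists>H. H \<in> Vdeg s m \<and> meval (gens s x y) H = e i"
  proof
    fix i assume "i \<in> {..<k}"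
    then have "e i \<in> meval (gens s x y) ` Vdeg s m"
      using e(1) ideal_pow_eq_meval_Vdeg by auto
    then show "\<exists>H. H \<in> Vdeg s m \<and> meval (gens s x y) H = e i"
      by (auto simp: image_iff)
  qed
  then obtain H where H: "\<forall>i\<in>{..<k}. H i \<in> Vdeg s m \<and> meval (gens s x y) (H i) = e i"
    by (rule bchoice[THEN exE])
  have "a = meval (gens s x y) (\<Sum>i<k. Var i * H i)"
    using H by (simp add: e(2) meval_gens_lin_comb[OF assms(2)])
  with H show ?thesis
    using that by blast
qed


lemma Qdeg_y_point:
  assumes "F \<in> Qdeg s x y (Suc m)"
  shows "meval (y_point s) F * y ^ Suc m \<in> lin_comb x s (ideal_pow I m)"
proof -
  have F: "F \<in> Vdeg s (Suc m)" "meval (gens s x y) F = 0"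
    using assms by (auto simp: Qdeg_iff)
  then obtain K where K: "\<forall>i<s. K i \<in> Vdeg s m"
    "F = Const (meval (y_point s) F) * Var s ^ Suc m + (\<Sum>i<s. Var i * K i)"
    using Vdeg_decomp_Y by fastforce
  have "0 = meval (y_point s) F * y ^ Suc m + (\<Sum>i<s. x i * meval (gens s x y) (K i))"
    using F(2) by (subst (asm) K(2)) (simp add: meval_add meval_mult meval_gens_lin_comb)
  then have "meval (y_point s) F * y ^ Suc m = (\<Sum>i<s. x i * - meval (gens s x y) (K i))"
    by (simp add: sum_negf eq_neg_iff_add_eq_0)
  also have "\<dots> \<in> lin_comb x s (ideal_pow I m)"
    by (rule lin_combI) (use K(1) in \<open>auto intro: ideal_uminus[OF is_ideal_ideal_pow] meval_Vdeg_in_ideal_pow\<close>)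
  finally show ?thesis .
qed

lemma Qle_y_point:
  assumes "F \<in> Qle s x y (Suc m)"
  shows "meval (y_point s) F \<in> colon (lin_comb x s (ideal_pow I m)) (y ^ Suc m)"
proof -
  define C where "C = colon (lin_comb x s (ideal_pow I m)) (y ^ Suc m)"
  have C: "is_ideal C"
    unfolding C_def by (intro is_ideal_colon is_ideal_lin_comb is_ideal_ideal_pow)
  have "Qdeg s x y d \<subseteq> {F. meval (y_point s) F \<in> C}" if "d \<le> Suc m" for d
  proof (cases d)
    case 0
    have "G = 0" if "G \<in> Qdeg s x y 0" for G
      using that Vdeg_0_eq_Const[of G s "gens s x y"] by (simp add: Qdeg_iff Const_def)
    then show ?thesis
      using 0 ideal_zero[OF C] by fastforce
  next
    case (Suc e)
    have "meval (y_point s) G * y ^ Suc m \<in> lin_comb x s (ideal_pow I m)" if "G \<in> Qdeg s x y d" for G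
    proof -
      have "meval (y_point s) G * y ^ Suc e * y ^ (m - e) \<in> lin_comb x s (ideal_pow I (e + (m - e)))"
        using Qdeg_y_point[of G e] that Suc
        by (intro lin_comb_mult_ideal_pow is_ideal_I power_in_ideal_pow y_in_I) auto
      moreover have "e + (m - e) = m"
        using \<open>d \<le> Suc m\<close> Suc by simp
      moreover have "y ^ Suc e * y ^ (m - e) = y ^ Suc m"
        using \<open>e + (m - e) = m\<close> by (metis add_Suc power_add)
      ultimately show ?thesis
        by (simp add: mult.assoc)
    qed
    then show ?thesis
      by (auto simp: C_def colon_def)
  qed
  moreover have "is_Videal s {F. meval (y_point s) F \<in> C}"
    unfolding is_Videal_def by (auto simp: meval_add meval_mult intro: ideal_zero ideal_add ideal_mult_left C)
  ultimately have "Qle s x y (Suc m) \<subseteq> {F. meval (y_point s) F \<in> C}"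
    unfolding Qle_def by (intro Vgen_least) auto
  then show ?thesis
    using assms by (auto simp: C_def)
qed

lemma Qdeg_from_colon:
  assumes "a * y ^ Suc m \<in> lin_comb x s (ideal_pow I m)"
  obtains H where "\<forall>i<s. H i \<in> Vdeg s m"
    "Const a * Var s ^ Suc m - (\<Sum>i<s. Var i * H i) \<in> Qdeg s x y (Suc m)"
proof -
  obtain H where H: "\<forall>i<s. H i \<in> Vdeg s m" "a * y ^ Suc m = meval (gens s x y) (\<Sum>i<s. Var i * H i)"
    using lin_comb_ideal_pow_lift[OF assms order_refl] by blast
  have "Const a * Var s ^ Suc m \<in> Vdeg s (Suc m)"
    by (intro Vdeg_Const_mult Vdeg_power Vdeg_Var) simp
  then have "Const a * Var s ^ Suc m - (\<Sum>i<s. Var i * H i) \<in> Vdeg s (Suc m)"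
    using H(1) by (intro Vdeg_diff Vdeg_lin_comb) auto
  then show ?thesis
    using H by (intro that[of H]) (simp_all add: Qdeg_iff meval_diff meval_mult)
qed

lemma lin_comb_subset_ideal_pow_Suc: "lin_comb x s (ideal_pow I m) \<subseteq> ideal_pow I (Suc m)"
  by (auto elim!: lin_combE intro!: ideal_sum[OF is_ideal_ideal_prod] ideal_prod_mem x_in_I)

lemma ideal_pow_Suc_eq_lin_comb_iff:
  "ideal_pow I (Suc m) = lin_comb x s (ideal_pow I m) \<longleftrightarrow> y ^ Suc m \<in> lin_comb x s (ideal_pow I m)"
proof
  assume "ideal_pow I (Suc m) = lin_comb x s (ideal_pow I m)"
  then show "y ^ Suc m \<in> lin_comb x s (ideal_pow I m)"
    using power_in_ideal_pow[OF is_ideal_I y_in_I, of "Suc m"] by simp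
next
  assume y: "y ^ Suc m \<in> lin_comb x s (ideal_pow I m)"
  have "ideal_pow I (Suc m) \<subseteq> lin_comb x s (ideal_pow I m)"
  proof
    fix a assume "a \<in> ideal_pow I (Suc m)"
    then obtain G where G: "G \<in> Vdeg s (Suc m)" "a = meval (gens s x y) G"
      unfolding ideal_pow_eq_meval_Vdeg by blast
    then obtain K where K: "\<forall>i<s. K i \<in> Vdeg s m"
      "G = Const (meval (y_point s) G) * Var s ^ Suc m + (\<Sum>i<s. Var i * K i)"
      using Vdeg_decomp_Y by fastforce
    have "a = meval (y_point s) G * y ^ Suc m + (\<Sum>i<s. x i * meval (gens s x y) (K i))"
      using G(2) by (subst (asm) K(2)) (simp add: meval_add meval_mult meval_gens_lin_comb)
    also have "\<dots> \<in> lin_comb x s (ideal_pow I m)"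
      using K(1) y
      by (intro ideal_add[OF is_ideal_lin_comb[OF is_ideal_ideal_pow]]
          ideal_mult_left[OF is_ideal_lin_comb[OF is_ideal_ideal_pow]] lin_combI meval_Vdeg_in_ideal_pow)
         auto
    finally show "a \<in> lin_comb x s (ideal_pow I m)" .
  qed
  then show "ideal_pow I (Suc m) = lin_comb x s (ideal_pow I m)"
    using lin_comb_subset_ideal_pow_Suc by blast
qed

lemma y_power_in_lin_comb_mono:
  assumes "y ^ Suc m \<in> lin_comb x s (ideal_pow I m)" "m \<le> k"
  shows "y ^ Suc k \<in> lin_comb x s (ideal_pow I k)"
  using assms(2)
proof (induction k rule: dec_induct)
  case base
  show ?case
    by (rule assms(1))
next
  case (step k)
  then have "y ^ Suc k * y \<in> lin_comb x s (ideal_pow I (k + 1))"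
    using y_in_I ideal_pow_1[OF is_ideal_I] by (intro lin_comb_mult_ideal_pow[OF is_ideal_I]) auto
  then show ?case
    by (simp add: mult.commute)
qed

lemma reduction_number_y_power:
  assumes red: "is_reduction (gen_ideal (x ` {..<s})) I" and J_neq_I: "gen_ideal (x ` {..<s}) \<noteq> I"
  obtains q where "reduction_number (gen_ideal (x ` {..<s})) I = Suc q"
    "y ^ Suc (Suc q) \<in> lin_comb x s (ideal_pow I (Suc q))" "y ^ Suc q \<notin> lin_comb x s (ideal_pow I q)"
proof -
  define r where "r = reduction_number (gen_ideal (x ` {..<s})) I"
  have r_Least: "r = (LEAST m. y ^ Suc m \<in> lin_comb x s (ideal_pow I m))"
    unfolding r_def reduction_number_def
    by (simp only: ideal_prod_gen_ideal_eq_lin_comb[OF is_ideal_ideal_pow] ideal_pow_Suc_eq_lin_comb_iff)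
  have "\<exists>m. y ^ Suc m \<in> lin_comb x s (ideal_pow I m)"
    using red unfolding is_reduction_def
    by (simp only: ideal_prod_gen_ideal_eq_lin_comb[OF is_ideal_ideal_pow] ideal_pow_Suc_eq_lin_comb_iff)
  then have y_r: "y ^ Suc r \<in> lin_comb x s (ideal_pow I r)"
    unfolding r_Least by (rule LeastI_ex)
  have "r \<noteq> 0"
  proof
    assume "r = 0"
    then have "ideal_pow I 1 = lin_comb x s UNIV"
      using y_r ideal_pow_Suc_eq_lin_comb_iff[of 0] by simp
    then show False
      using J_neq_I ideal_pow_1[OF is_ideal_I] by (simp add: gen_ideal_eq_lin_comb)
  qed
  then obtain q where q: "r = Suc q"
    using not0_implies_Suc by blast
  moreover have "y ^ Suc q \<notin> lin_comb x s (ideal_pow I q)"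
    using not_less_Least[of q "\<lambda>m. y ^ Suc m \<in> lin_comb x s (ideal_pow I m)"] q r_Least by simp
  ultimately show ?thesis
    using y_r by (intro that) (simp_all only: r_def[symmetric] q)
qed

end

locale rees_regular = rees_generators +
  assumes reg_seq: "reg_seq x s" and G_reg_seq: "G_reg_seq I x (s - 1)"
begin

lemma last_coeff_in_lin_comb:
  assumes "k < s" "\<forall>i\<le>k. K i \<in> Vdeg s (Suc m)"
    and syz: "meval (gens s x y) (\<Sum>i<Suc k. Var i * K i) = 0"
  shows "meval (gens s x y) (K k) \<in> lin_comb x k (ideal_pow I m)"
proof -
  define a where "a = meval (gens s x y) (K k)"
  have "x k * a + (\<Sum>i<k. x i * meval (gens s x y) (K i)) = 0"
    using syz assms(1) by (simp add: a_def meval_add meval_mult meval_gens_lin_comb gens_def add.commute)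
  then have "x k * a = - (\<Sum>i<k. x i * meval (gens s x y) (K i))"
    by (simp add: eq_neg_iff_add_eq_0)
  also have "\<dots> \<in> lin_comb x k UNIV"
    by (intro ideal_uminus is_ideal_lin_comb lin_combI) auto
  finally have "a * x k \<in> gen_ideal (x ` {..<k})"
    by (simp add: gen_ideal_eq_lin_comb mult.commute)
  then have "a \<in> lin_comb x k UNIV"
    using reg_seq assms(1) unfolding reg_seq_def gen_ideal_eq_lin_comb by blast
  moreover have "a \<in> ideal_pow I (Suc m)"
    unfolding a_def by (rule meval_Vdeg_in_ideal_pow) (use assms(2) in simp)
  ultimately show ?thesis
    using G_reg_seq assms(1) unfolding a_def G_reg_seq_def
    by (intro G_regular_inter_ideal_pow[OF is_ideal_I, of "s - 1"]) (auto intro: x_in_I)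
qed

text \<open>The value of K_k lies in (x_0, ..., x_(k-1)) I^m; lifting it to sum_j X_j B_j turns
  K_k - sum_j X_j B_j into an equation of degree m + 1 and moves X_k B_j into earlier coefficients.\<close>

lemma lin_syzygy_in_Qle:
  "k \<le> s \<Longrightarrow> \<forall>i<k. K i \<in> Vdeg s (Suc m) \<Longrightarrow> meval (gens s x y) (\<Sum>i<k. Var i * K i) = 0
    \<Longrightarrow> (\<Sum>i<k. Var i * K i) \<in> Qle s x y (Suc m)"
proof (induction k arbitrary: K)
  case 0
  then show ?case
    using Videal_zero[OF is_Videal_Qle] by simp
next
  case (Suc k)
  then have "meval (gens s x y) (K k) \<in> lin_comb x k (ideal_pow I m)"
    by (intro last_coeff_in_lin_comb) auto
  then obtain B where B: "\<forall>j<k. B j \<in> Vdeg s m"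
    "meval (gens s x y) (K k) = meval (gens s x y) (\<Sum>j<k. Var j * B j)"
    using Suc.prems(1) by (elim lin_comb_ideal_pow_lift) auto
  define L where "L = K k - (\<Sum>j<k. Var j * B j)"
  have "L \<in> Qdeg s x y (Suc m)"
    unfolding L_def Qdeg_iff using Suc.prems B
    by (auto simp: meval_diff intro!: Vdeg_diff Vdeg_lin_comb)
  then have "Var k * L \<in> Qle s x y (Suc m)"
    using Suc.prems(1) Qdeg_subset_Qle[of "Suc m" "Suc m" s x y]
    by (intro Videal_mult[OF is_Videal_Qle] Vcarrier_Var) auto
  moreover have split: "(\<Sum>i<Suc k. Var i * K i) = (\<Sum>i<k. Var i * (K i + Var k * B i)) + Var k * L"
    by (simp add: L_def algebra_simps sum.distrib sum_distrib_left)
  moreover have "(\<Sum>i<k. Var i * (K i + Var k * B i)) \<in> Qle s x y (Suc m)"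
  proof (rule Suc.IH)
    show "\<forall>i<k. K i + Var k * B i \<in> Vdeg s (Suc m)"
      using Suc.prems(1,2) B(1) by (auto intro!: Vdeg_add Vdeg_Var_mult)
    have "meval (gens s x y) L = 0"
      using \<open>L \<in> Qdeg s x y (Suc m)\<close> by (simp add: Qdeg_iff)
    then show "meval (gens s x y) (\<Sum>i<k. Var i * (K i + Var k * B i)) = 0"
      using Suc.prems(3) unfolding split by (simp add: meval_add meval_mult)
  qed (use Suc.prems(1) in simp)
  ultimately show ?case
    by (simp add: Videal_add[OF is_Videal_Qle])
qed

theorem Qle_iff_y_point:
  assumes F: "F \<in> Qdeg s x y (Suc (Suc m))"
  shows "F \<in> Qle s x y (Suc m) \<longleftrightarrow> meval (y_point s) F \<in> colon (lin_comb x s (ideal_pow I m)) (y ^ Suc m)"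
proof
  assume "meval (y_point s) F \<in> colon (lin_comb x s (ideal_pow I m)) (y ^ Suc m)"
  then have "meval (y_point s) F * y ^ Suc m \<in> lin_comb x s (ideal_pow I m)"
    by (simp add: colon_def del: power_Suc)
  then obtain H where H: "\<forall>i<s. H i \<in> Vdeg s m"
    "Const (meval (y_point s) F) * Var s ^ Suc m - (\<Sum>i<s. Var i * H i) \<in> Qdeg s x y (Suc m)"
    (is "?G \<in> _")
    by (rule Qdeg_from_colon)
  \<comment> \<open>Subtracting \<open>Y\<close> times the equation \<open>?G\<close> leaves a linear syzygy.\<close>
  have YG: "Var s * ?G \<in> Qle s x y (Suc m)"
    using H(2) Qdeg_subset_Qle[of "Suc m" "Suc m" s x y]
    by (intro Videal_mult[OF is_Videal_Qle] Vcarrier_Var) auto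
  obtain K where K: "\<forall>i<s. K i \<in> Vdeg s (Suc m)"
    "F = Const (meval (y_point s) F) * Var s ^ Suc (Suc m) + (\<Sum>i<s. Var i * K i)"
    using Vdeg_decomp_Y F by (fastforce simp: Qdeg_iff)
  have split: "F - Var s * ?G = (\<Sum>i<s. Var i * (K i + Var s * H i))"
    by (subst K(2)) (simp add: algebra_simps sum.distrib sum_distrib_left)
  have "(\<Sum>i<s. Var i * (K i + Var s * H i)) \<in> Qle s x y (Suc m)"
  proof (rule lin_syzygy_in_Qle)
    show "\<forall>i<s. K i + Var s * H i \<in> Vdeg s (Suc m)"
      using K(1) H(1) by (auto intro!: Vdeg_add Vdeg_Var_mult)
    show "meval (gens s x y) (\<Sum>i<s. Var i * (K i + Var s * H i)) = 0"
      using F H(2) unfolding split[symmetric] by (simp add: Qdeg_iff meval_diff meval_mult)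
  qed simp
  then have "(F - Var s * ?G) + Var s * ?G \<in> Qle s x y (Suc m)"
    unfolding split using YG by (rule Videal_add[OF is_Videal_Qle])
  then show "F \<in> Qle s x y (Suc m)"
    by simp
qed (rule Qle_y_point)


lemma Qle_Suc_Suc_subset:
  assumes "y ^ Suc m \<in> lin_comb x s (ideal_pow I m)"
  shows "Qle s x y (Suc (Suc m)) \<subseteq> Qle s x y (Suc m)"
  unfolding Qle_def[of s x y "Suc (Suc m)"]
proof (rule Vgen_least[OF _ is_Videal_Qle], rule UN_least)
  fix d assume "d \<in> {..Suc (Suc m)}"
  then consider "d \<le> Suc m" | "d = Suc (Suc m)"
    by fastforce
  then show "Qdeg s x y d \<subseteq> Qle s x y (Suc m)"
  proof cases
    case 2
    have "meval (y_point s) F * y ^ Suc m \<in> lin_comb x s (ideal_pow I m)" for F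
      using assms by (rule ideal_mult_left[OF is_ideal_lin_comb[OF is_ideal_ideal_pow]])
    then show ?thesis
      using 2 Qle_iff_y_point by (auto simp: colon_def simp del: power_Suc)
  qed (rule Qdeg_subset_Qle)
qed

lemma Qeq_eq_Qle:
  assumes "y ^ Suc m \<in> lin_comb x s (ideal_pow I m)"
  shows "Qeq s x y = Qle s x y (Suc m)"
proof
  have "Qle s x y n \<subseteq> Qle s x y (Suc m)" for n
  proof (induction n)
    case (Suc n)
    show ?case
    proof (cases "n \<le> m")
      case False
      then obtain k where "n = Suc k" "m \<le> k"
        by (metis Suc_le_D not_less_eq_eq)
      then show ?thesis
        using Qle_Suc_Suc_subset[OF y_power_in_lin_comb_mono[OF assms]] Suc.IH by blast
    qed (simp add: Qle_mono)
  qed (simp add: Qle_mono)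
  then have "homog_comp d F \<in> Qle s x y (Suc m)" if "F \<in> Qeq s x y" for F d
    using homog_comp_Qdeg[OF that] Qdeg_subset_Qle[of d d s x y] by blast
  then show "Qeq s x y \<subseteq> Qle s x y (Suc m)"
    by (metis Videal_sum[OF is_Videal_Qle] subsetI sum_homog_comp)
qed (rule Qle_subset_Qeq)

lemma Qle_Suc_Suc_eq_Vgen_insert:
  assumes P: "P \<in> Qdeg s x y (Suc (Suc m))" and P1: "meval (y_point s) P = 1"
  shows "Qle s x y (Suc (Suc m)) = Vgen s (insert P (Qle s x y (Suc m)))"
proof
  show "Vgen s (insert P (Qle s x y (Suc m))) \<subseteq> Qle s x y (Suc (Suc m))"
    using P Qdeg_subset_Qle[of "Suc (Suc m)" "Suc (Suc m)" s x y] Qle_mono[of "Suc m" "Suc (Suc m)" s x y]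
    by (intro Vgen_least is_Videal_Qle) auto
  show "Qle s x y (Suc (Suc m)) \<subseteq> Vgen s (insert P (Qle s x y (Suc m)))"
    unfolding Qle_def[of s x y "Suc (Suc m)"]
  proof (rule Vgen_least[OF _ is_Videal_Vgen], rule UN_least)
    fix d assume "d \<in> {..Suc (Suc m)}"
    then consider "d \<le> Suc m" | "d = Suc (Suc m)"
      by fastforce
    then show "Qdeg s x y d \<subseteq> Vgen s (insert P (Qle s x y (Suc m)))"
    proof cases
      case 1
      then show ?thesis
        using Qdeg_subset_Qle[of d "Suc m" s x y] by (auto intro: Vgen_base)
    next
      case 2
      show ?thesis
      proof
        fix F assume F: "F \<in> Qdeg s x y d"
        define c where "c = meval (y_point s) F"
        have "F - Const c * P \<in> Qdeg s x y (Suc (Suc m))"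
          using F P 2 by (auto simp: Qdeg_iff meval_diff meval_mult intro!: Vdeg_diff Vdeg_Const_mult)
        moreover have "meval (y_point s) (F - Const c * P) = 0"
          by (simp add: c_def meval_diff meval_mult P1)
        ultimately have "F - Const c * P \<in> Qle s x y (Suc m)"
          using Qle_iff_y_point zero_in_colon[OF is_ideal_lin_comb[OF is_ideal_ideal_pow]]
          by auto
        then have "F - Const c * P + Const c * P \<in> Vgen s (insert P (Qle s x y (Suc m)))"
          by (intro Videal_add[OF is_Videal_Vgen] Videal_mult[OF is_Videal_Vgen] Vgen_base) auto
        then show "F \<in> Vgen s (insert P (Qle s x y (Suc m)))"
          by simp
      qed
    qed
  qed
qed


theorem y_point_correspondence:
  assumes "n \<ge> 2"
  shows "(\<forall>F\<in>Qdeg s x y n. meval (y_point s) F \<in> colon (lin_comb x s (ideal_pow I (n - 1))) (y ^ n))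
    \<and> (\<forall>F\<in>Qdeg s x y n. F \<in> Qle s x y (n - 1) \<longleftrightarrow>
         meval (y_point s) F \<in> colon (lin_comb x s (ideal_pow I (n - 2))) (y ^ (n - 1)))
    \<and> (\<forall>a\<in>colon (lin_comb x s (ideal_pow I (n - 1))) (y ^ n). \<exists>F\<in>Qdeg s x y n. meval (y_point s) F = a)"
proof -
  obtain m where n: "n = Suc (Suc m)"
    using assms by (metis add_2_eq_Suc le_Suc_ex)
  have "\<exists>F\<in>Qdeg s x y n. meval (y_point s) F = a"
    if a: "a \<in> colon (lin_comb x s (ideal_pow I (n - 1))) (y ^ n)" for a
  proof -
    obtain H where "Const a * Var s ^ n - (\<Sum>i<s. Var i * H i) \<in> Qdeg s x y n"
      using a Qdeg_from_colon[of a "Suc m"] by (auto simp: n colon_def simp del: power_Suc ideal_pow.simps(2))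
    moreover have "meval (y_point s) (Const a * Var s ^ n - (\<Sum>i<s. Var i * H i)) = a"
      by (simp add: meval_diff meval_mult)
    ultimately show ?thesis
      by blast
  qed
  moreover have "meval (y_point s) F \<in> colon (lin_comb x s (ideal_pow I (n - 1))) (y ^ n)"
    if "F \<in> Qdeg s x y n" for F
    using that Qdeg_y_point by (simp add: n colon_def del: power_Suc ideal_pow.simps(2))
  ultimately show ?thesis
    using Qle_iff_y_point by (simp add: n)
qed

theorem relation_type_reduction_number:
  assumes red: "is_reduction (gen_ideal (x ` {..<s})) I" and J_neq_I: "gen_ideal (x ` {..<s}) \<noteq> I"
  defines "r \<equiv> reduction_number (gen_ideal (x ` {..<s})) I"
  shows "relation_type s x y = r + 1
    \<and> (\<exists>Fs. (\<forall>i<s. Fs i \<in> Vdeg s r)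
       \<and> Var s ^ (r + 1) - (\<Sum>i<s. Var i * Fs i) \<in> Qdeg s x y (r + 1)
       \<and> Qeq s x y = Vgen s (insert (Var s ^ (r + 1) - (\<Sum>i<s. Var i * Fs i)) (Qle s x y r)))"
proof -
  obtain q where q: "r = Suc q" and y_r: "y ^ Suc r \<in> lin_comb x s (ideal_pow I r)"
    and y_q: "y ^ Suc q \<notin> lin_comb x s (ideal_pow I q)"
    using reduction_number_y_power[OF red J_neq_I] unfolding r_def by metis
  obtain Fs where Fs: "\<forall>i<s. Fs i \<in> Vdeg s r" "Var s ^ Suc r - (\<Sum>i<s. Var i * Fs i) \<in> Qdeg s x y (Suc r)"
    using Qdeg_from_colon[of 1 r] y_r by auto
  define P where "P = Var s ^ Suc r - (\<Sum>i<s. Var i * Fs i)"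
  have P1: "meval (y_point s) P = 1"
    by (simp add: P_def meval_diff meval_mult)
  have P: "P \<in> Qdeg s x y (Suc (Suc q))"
    using Fs(2) by (simp only: P_def q)
  have "P \<notin> Qle s x y r"
    using Qle_iff_y_point[OF P] y_q by (simp add: q colon_def P1 del: power_Suc)
  moreover have Qeq: "Qeq s x y = Qle s x y (Suc r)"
    by (rule Qeq_eq_Qle[OF y_r])
  moreover have "P \<in> Qeq s x y"
    using P by (simp add: Qdeg_def)
  ultimately have "relation_type s x y = Suc r"
    by (intro relation_type_eqI) auto
  moreover have "Qeq s x y = Vgen s (insert P (Qle s x y r))"
    using Qeq Qle_Suc_Suc_eq_Vgen_insert[OF P P1] by (simp only: q)
  ultimately show ?thesis
    using Fs by (auto simp: P_def)
qed

end

theorem theorem4p1: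
  fixes m I :: "'a::comm_ring_1 set" and x :: "nat \<Rightarrow> 'a" and y :: 'a and s :: nat
  assumes noeth: "noetherian TYPE('a)"
    and loc: "local_ring m"
    and s1: "s \<ge> 1"
    and mingens: "minimal_gens I s x y"
    and Rseq: "reg_seq x s"
    and Gseq: "G_reg_seq I x (s - 1)"
  defines "J \<equiv> gen_ideal (x ` {..<s})"
  shows "(\<forall>n\<ge>2.
            (\<forall>F\<in>Qdeg s x y n.
               meval (\<lambda>i. if i < s then 0 else 1) F
                 \<in> colon (ideal_prod J (ideal_pow I (n - 1))) (y ^ n))
          \<and> (\<forall>F G :: 'a mpoly. meval (\<lambda>i. if i < s then 0 else 1) (F + G)
                   = meval (\<lambda>i. if i < s then 0 else 1) F + meval (\<lambda>i. if i < s then 0 else 1) G)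
          \<and> (\<forall>(c::'a) (F::'a mpoly). meval (\<lambda>i. if i < s then 0 else 1) (Const c * F)
                   = c * meval (\<lambda>i. if i < s then 0 else 1) F)
          \<and> (\<forall>F\<in>Qdeg s x y n.
               F \<in> Qle s x y (n - 1) \<longleftrightarrow>
               meval (\<lambda>i. if i < s then 0 else 1) F
                 \<in> colon (ideal_prod J (ideal_pow I (n - 2))) (y ^ (n - 1)))
          \<and> (\<forall>a\<in>colon (ideal_prod J (ideal_pow I (n - 1))) (y ^ n).
               \<exists>F\<in>Qdeg s x y n. a - meval (\<lambda>i. if i < s then 0 else 1) F
                 \<in> colon (ideal_prod J (ideal_pow I (n - 2))) (y ^ (n - 1))))
       \<and> (is_reduction J I \<longrightarrow>
            relation_type s x y = reduction_number J I + 1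
          \<and> (\<exists>Fs. (\<forall>i<s. Fs i \<in> Vdeg s (reduction_number J I))
               \<and> Var s ^ (reduction_number J I + 1) - (\<Sum>i<s. Var i * Fs i)
                   \<in> Qdeg s x y (reduction_number J I + 1)
               \<and> Qeq s x y = Vgen s (insert (Var s ^ (reduction_number J I + 1) - (\<Sum>i<s. Var i * Fs i))
                                         (Qle s x y (reduction_number J I)))))"
proof -
  have I: "I = gen_ideal (insert y (x ` {..<s}))"
    using mingens by (simp add: minimal_gens_def)
  interpret rees_regular s x y I
    by unfold_locales (fact I Rseq Gseq)+
  have pt: "(\<lambda>i. if i < s then 0 else 1) = (y_point s :: nat \<Rightarrow> 'a)"
    by (simp add: fun_eq_iff y_point_def)
  have JI: "ideal_prod J (ideal_pow I k) = lin_comb x s (ideal_pow I k)" for k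
    unfolding J_def by (rule ideal_prod_gen_ideal_eq_lin_comb[OF is_ideal_ideal_pow])
  show ?thesis
    unfolding pt JI unfolding J_def
    by (intro conjI allI impI ballI; insert y_point_correspondence relation_type_reduction_number
        minimal_gens_gen_ideal_neq[OF mingens] zero_in_colon[OF is_ideal_lin_comb[OF is_ideal_ideal_pow]];
        (simp only: meval_add meval_mult meval_Const)?; (blast | fastforce))
qed

end
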